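(* Let $d\ge1$, $n\ge1$, and let $X=(X_1,\dots,X_n)$ be a random vector with independent components satisfying $\mathbb{E}[X_i]=0$ for all $i$, such that there exist $\alpha>2$ and $b>0$ with $\mathbb{P}(|X_i|\ge t)\le (b/t)^\alpha$ for all $t\ge b$ and all $i=1,\dots,n$. Let $A=(a_{i_1\dots i_d})\in\mathbb{R}^{n^d}$ be a tensor with generalized diagonal $0$, and set $$f_{d,A}(X):=\sum_{i_1,\dots,i_d=1}^n a_{i_1\dots i_d}X_{i_1}\cdots X_{i_d}.$$ Then there is a constant $C_{d,\alpha}>0$ depending only on $d$ and $\alpha$ such that $$\|f_{d,A}(X)\|_{L^p}\le C_{d,\alpha}\,\|A\|_{\mathrm{HS}}\,b^d\Big(\frac{\alpha}{\alpha-p}\Big)^{d/p}$$ for all $p\in[2,\alpha)$, and $$\mathbb{P}(|f_{d,A}(X)|\ge t)\le C_{d,\alpha}\log^d\Big(\frac{t}{\|A\|_{\mathrm{HS}}b^d}\Big)\Big(\frac{\|A\|_{\mathrm{HS}}b^d}{t}\Big)^\alpha$$ for all $t\ge C_{d,\alpha}\|A\|_{\mathrm{HS}}b^d$.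
   Context: $\|Z\|_{L^p}:=(\mathbb{E}|Z|^p)^{1/p}$. A tensor $A=(a_{i_1\dots i_d})$ has generalized diagonal $0$ if $a_{i_1\dots i_d}=0$ whenever $i_j=i_{j'}$ for some $j\ne j'$. $\|A\|_{\mathrm{HS}}:=\big(\sum_{i_1,\dots,i_d}a_{i_1\dots i_d}^2\big)^{1/2}$ is the Hilbert–Schmidt norm. *)

theory Defs
  imports "HOL-Probability.Probability"
begin

definition tensor_indices :: "nat \<Rightarrow> nat \<Rightarrow> nat list set" where
  "tensor_indices n d = {is. length is = d \<and> set is \<subseteq> {..<n}}"

definition gen_diag_zero :: "nat \<Rightarrow> nat \<Rightarrow> (nat list \<Rightarrow> real) \<Rightarrow> bool" where
  "gen_diag_zero n d A \<longleftrightarrow> (\<forall>is\<in>tensor_indices n d. \<not> distinct is \<longrightarrow> A is = 0)"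

definition hs_norm :: "nat \<Rightarrow> nat \<Rightarrow> (nat list \<Rightarrow> real) \<Rightarrow> real" where
  "hs_norm n d A = sqrt (\<Sum>is\<in>tensor_indices n d. (A is)\<^sup>2)"

definition chaos :: "nat \<Rightarrow> nat \<Rightarrow> (nat list \<Rightarrow> real) \<Rightarrow> (nat \<Rightarrow> 'a \<Rightarrow> real) \<Rightarrow> 'a \<Rightarrow> real" where
  "chaos n d A X \<omega> = (\<Sum>is\<in>tensor_indices n d. A is * (\<Prod>j<d. X (is ! j) \<omega>))"

definition Lp_norm :: "'a measure \<Rightarrow> real \<Rightarrow> ('a \<Rightarrow> real) \<Rightarrow> real" where
  "Lp_norm M p Z = (integral\<^sup>L M (\<lambda>\<omega>. \<bar>Z \<omega>\<bar> powr p)) powr (1 / p)"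

end

(*
  Ordering the multi-indices by their largest entry k writes the chaos as a martingale
  f = \<Sum>\<^sub>k X\<^sub>k H\<^sub>k, where H\<^sub>k is a chaos of degree d - 1 in X\<^sub>0, ..., X\<^sub>k\<^sub>-\<^sub>1 whose coefficients are
  those of A summed over the d positions that k can occupy; since X\<^sub>k is centred and independent of
  the past, each increment is orthogonal to every function of the earlier variables.
  A Burkholder-type inequality (a second-order expansion of |s + y|^p, Hoelder's inequality and
  induction over k) bounds the p-th moment of such a sum by (\<Sum>\<^sub>k \<parallel>X\<^sub>k H\<^sub>k\<parallel>\<^sub>p\<^sup>2)^(p/2), and
  \<Sum>\<^sub>k \<parallel>H\<^sub>k\<parallel>\<^sub>H\<^sub>S\<^sup>2 \<le> d \<parallel>A\<parallel>\<^sub>H\<^sub>S\<^sup>2 by Cauchy-Schwarz. Induction on d then bounds \<parallel>f\<parallel>\<^sub>p by \<parallel>A\<parallel>\<^sub>H\<^sub>S times the d/p-th power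
  of the largest p-th moment of the X\<^sub>i, which the tail assumption bounds by b^p \<alpha> / (\<alpha> - p) after
  summing over the shells b e^j \<le> |X\<^sub>i| < b e^(j+1). The tail estimate is Markov's inequality for
  the p-th moment with p = \<alpha> - 1 / log (t / (\<parallel>A\<parallel>\<^sub>H\<^sub>S b^d)).
*)

theory Submission
  imports Defs
begin

section \<open>Elementary inequalities for powers\<close>

text \<open>\<open>p * powr_deriv p s\<close> and \<open>p * (p - 1) * powr_weight p s\<close> are the first two derivatives
  of \<open>\<bar>s\<bar> powr p\<close>; both are \<open>0\<close> at \<open>s = 0\<close>.\<close>
definition powr_deriv :: "real \<Rightarrow> real \<Rightarrow> real" where
  "powr_deriv p s = \<bar>s\<bar> powr p / s"

definition powr_weight :: "real \<Rightarrow> real \<Rightarrow> real" where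
  "powr_weight p s = \<bar>s\<bar> powr p / s\<^sup>2"

lemma powr_deriv_0 [simp]: "powr_deriv p 0 = 0"
  and powr_weight_0 [simp]: "powr_weight p 0 = 0"
  by (simp_all add: powr_deriv_def powr_weight_def)

lemma powr_weight_nonneg: "0 \<le> powr_weight p s"
  by (simp add: powr_weight_def)

lemma powr_weight_eq: "s \<noteq> 0 \<Longrightarrow> powr_weight p s = \<bar>s\<bar> powr (p - 2)"
  by (simp add: powr_weight_def powr_diff powr_numeral)

lemma one_plus_powr_le_taylor:
  fixes p x :: real
  assumes p: "2 \<le> p" and x: "\<bar>x\<bar> \<le> 1/2"
  shows "(1 + x) powr p \<le> 1 + p * x + p * (p - 1) * 2 powr p * x\<^sup>2"
proof (cases "x = 0")
  case True
  then show ?thesis by simp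
next
  case False
  define derivs where "derivs = (\<lambda>m::nat. \<lambda>t::real. if m = 0 then (1 + t) powr p
     else if m = 1 then p * (1 + t) powr (p - 1) else p * (p - 1) * (1 + t) powr (p - 2))"
  have D: "\<forall>m t. m < 2 \<and> -1/2 \<le> t \<and> t \<le> 1/2 \<longrightarrow> DERIV (derivs m) t :> derivs (Suc m) t"
  proof (intro allI impI)
    fix m :: nat and t :: real
    assume a: "m < 2 \<and> -1/2 \<le> t \<and> t \<le> 1/2"
    then have t: "0 < 1 + t" by simp
    have d1: "((\<lambda>t. (1 + t) powr p) has_real_derivative p * (1 + t) powr (p - 1)) (at t)"
      using t by (auto intro!: derivative_eq_intros)
    have d2: "((\<lambda>t. p * (1 + t) powr (p - 1)) has_real_derivative p * ((p - 1) * (1 + t) powr (p - 1 - 1))) (at t)"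
      using t by (auto intro!: derivative_eq_intros)
    from a consider "m = 0" | "m = 1" by linarith
    then show "DERIV (derivs m) t :> derivs (Suc m) t"
      by cases (use d1 d2 in \<open>simp_all add: derivs_def algebra_simps\<close>)
  qed
  obtain t where t: "if x < 0 then x < t \<and> t < 0 else 0 < t \<and> t < x"
    and eq: "derivs 0 x = (\<Sum>m<2. derivs m 0 / fact m * (x - 0) ^ m) + derivs 2 t / fact 2 * (x - 0)\<^sup>2"
  proof -
    have "-1/2 \<le> x" "x \<le> 1/2"
      using x by auto
    from Taylor[of 2 derivs "derivs 0" "-1/2" "1/2" 0 x, OF _ _ D _ _ this False]
    show ?thesis
      using that by auto
  qed
  have e: "(1 + x) powr p = 1 + p * x + p * (p - 1) * (1 + t) powr (p - 2) / 2 * x\<^sup>2"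
    using eq by (simp add: derivs_def numeral_2_eq_2 lessThan_Suc)
  have "(1 + t) powr (p - 2) \<le> 2 powr (p - 2)"
    using t x p by (intro powr_mono2) (auto split: if_splits)
  also have "\<dots> \<le> 2 powr p"
    by (intro powr_mono) auto
  finally have "(1 + t) powr (p - 2) / 2 \<le> 2 powr p"
    using powr_ge_zero[of "1 + t" "p - 2"] by linarith
  then have "p * (p - 1) * ((1 + t) powr (p - 2) / 2) * x\<^sup>2 \<le> p * (p - 1) * 2 powr p * x\<^sup>2"
    using p by (intro mult_right_mono mult_left_mono) auto
  then show ?thesis
    using e by simp
qed

definition expansion_const :: "real \<Rightarrow> real" where
  "expansion_const a = 3 powr a + a * 2 powr a + a\<^sup>2 * 2 powr a"

lemma expansion_const_ge:
  assumes "2 \<le> p" "p \<le> a"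
  shows "p * (p - 1) * 2 powr p \<le> expansion_const a"
    and "3 powr p + p * 2 powr p \<le> expansion_const a"
    and "1 \<le> expansion_const a"
proof -
  have A: "2 powr p \<le> 2 powr a" "3 powr p \<le> 3 powr a"
    using assms by auto
  have "p * (p - 1) \<le> a\<^sup>2"
    using assms by (simp add: power2_eq_square mult_mono)
  then have "p * (p - 1) * 2 powr p \<le> a\<^sup>2 * 2 powr a"
    using A assms by (intro mult_mono) auto
  moreover have "p * 2 powr p \<le> a * 2 powr a"
    using A assms by (intro mult_mono) auto
  moreover have "1 \<le> 3 powr a"
    using assms by (intro ge_one_powr_ge_zero) auto
  moreover have "0 \<le> a * 2 powr a" "0 \<le> a\<^sup>2 * 2 powr a"
    using assms by auto
  ultimately show "p * (p - 1) * 2 powr p \<le> expansion_const a"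
    and "3 powr p + p * 2 powr p \<le> expansion_const a" and "1 \<le> expansion_const a"
    unfolding expansion_const_def using A by linarith+
qed

lemma abs_add_powr_expansion_small:
  fixes p s y :: real
  assumes p: "2 \<le> p" "p \<le> a" and s: "s > 0" and y: "\<bar>y\<bar> \<le> s / 2"
  shows "\<bar>s + y\<bar> powr p \<le> \<bar>s\<bar> powr p + p * powr_deriv p s * y
           + expansion_const a * (powr_weight p s * y\<^sup>2 + \<bar>y\<bar> powr p)"
proof -
  define x where "x = y / s"
  have x: "\<bar>x\<bar> \<le> 1/2"
    using y s by (simp add: x_def abs_div divide_le_eq)
  have w: "0 \<le> powr_weight p s * y\<^sup>2"
    by (simp add: powr_weight_def)
  have "s + y = s * (1 + x)"
    using s by (simp add: x_def field_simps)
  then have "\<bar>s + y\<bar> powr p = s powr p * (1 + x) powr p"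
    using s x by (simp add: abs_mult powr_mult)
  also have "\<dots> \<le> s powr p * (1 + p * x + p * (p - 1) * 2 powr p * x\<^sup>2)"
    using one_plus_powr_le_taylor[OF p(1) x] s by (intro mult_left_mono) auto
  also have "\<dots> = s powr p + p * powr_deriv p s * y + p * (p - 1) * 2 powr p * (powr_weight p s * y\<^sup>2)"
    using s by (simp add: powr_deriv_def powr_weight_def x_def field_simps power2_eq_square)
  also have "p * (p - 1) * 2 powr p * (powr_weight p s * y\<^sup>2)
      \<le> expansion_const a * (powr_weight p s * y\<^sup>2 + \<bar>y\<bar> powr p)"
    using expansion_const_ge[OF p] w
    by (intro mult_mono) auto
  finally show ?thesis
    using s by simp
qed

lemma abs_add_powr_expansion_large:
  fixes p s y :: real
  assumes p: "2 \<le> p" "p \<le> a" and y: "\<bar>s\<bar> / 2 < \<bar>y\<bar>"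
  shows "\<bar>s + y\<bar> powr p \<le> \<bar>s\<bar> powr p + p * powr_deriv p s * y
           + expansion_const a * (powr_weight p s * y\<^sup>2 + \<bar>y\<bar> powr p)"
proof -
  have L: "3 powr p + p * 2 powr p \<le> expansion_const a" "1 \<le> expansion_const a"
    using expansion_const_ge[OF p] by auto
  have "\<bar>s + y\<bar> powr p \<le> (3 * \<bar>y\<bar>) powr p"
    using y p by (intro powr_mono2) auto
  then have lhs: "\<bar>s + y\<bar> powr p \<le> 3 powr p * \<bar>y\<bar> powr p"
    by (simp add: powr_mult)
  have "\<bar>powr_deriv p s * y\<bar> \<le> \<bar>s\<bar> powr (p - 1) * \<bar>y\<bar>"
    by (cases "s = 0") (simp_all add: powr_deriv_def abs_mult powr_diff)
  also have "\<dots> \<le> (2 * \<bar>y\<bar>) powr (p - 1) * \<bar>y\<bar>"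
    using y p by (intro mult_right_mono powr_mono2) auto
  also have "\<dots> = 2 powr (p - 1) * \<bar>y\<bar> powr p"
    using y by (simp add: powr_mult powr_diff)
  also have "\<dots> \<le> 2 powr p * \<bar>y\<bar> powr p"
    by (intro mult_right_mono powr_mono) auto
  finally have "- (p * (2 powr p * \<bar>y\<bar> powr p)) \<le> p * (powr_deriv p s * y)"
    using p mult_left_mono[of "- (2 powr p * \<bar>y\<bar> powr p)" "powr_deriv p s * y" p]
    by (simp add: abs_le_iff)
  moreover have "3 powr p * \<bar>y\<bar> powr p + p * (2 powr p * \<bar>y\<bar> powr p) \<le> expansion_const a * \<bar>y\<bar> powr p"
    using mult_right_mono[OF L(1), of "\<bar>y\<bar> powr p"] by (simp add: algebra_simps)
  moreover have "expansion_const a * \<bar>y\<bar> powr p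
      \<le> expansion_const a * (powr_weight p s * y\<^sup>2 + \<bar>y\<bar> powr p)"
    using L powr_weight_nonneg[of p s] by (intro mult_left_mono) auto
  ultimately show ?thesis
    using lhs powr_ge_zero[of "\<bar>s\<bar>" p] unfolding mult.assoc[of p] by linarith
qed

text \<open>The constant depends only on the upper bound \<open>a\<close> of \<open>p\<close>; the remainder term
  \<open>powr_weight p s * y\<^sup>2\<close> is the relevant one when \<open>y\<close> is small compared to \<open>s\<close>, \<open>\<bar>y\<bar> powr p\<close> otherwise.\<close>
lemma abs_add_powr_expansion:
  fixes p s y :: real
  assumes p: "2 \<le> p" "p \<le> a"
  shows "\<bar>s + y\<bar> powr p \<le> \<bar>s\<bar> powr p + p * powr_deriv p s * y
           + expansion_const a * (powr_weight p s * y\<^sup>2 + \<bar>y\<bar> powr p)"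
proof -
  consider "s > 0" "\<bar>y\<bar> \<le> \<bar>s\<bar> / 2" | "s < 0" "\<bar>y\<bar> \<le> \<bar>s\<bar> / 2" | "\<bar>s\<bar> / 2 < \<bar>y\<bar>" | "s = 0" "y = 0"
    by linarith
  then show ?thesis
  proof cases
    case 1
    then show ?thesis
      using abs_add_powr_expansion_small[OF p] by simp
  next
    case 2
    then have "\<bar>- s + - y\<bar> powr p \<le> \<bar>- s\<bar> powr p + p * powr_deriv p (- s) * (- y)
                 + expansion_const a * (powr_weight p (- s) * (- y)\<^sup>2 + \<bar>- y\<bar> powr p)"
      by (intro abs_add_powr_expansion_small[OF p]) auto
    moreover have "\<bar>- s + - y\<bar> = \<bar>s + y\<bar>"
      by linarith
    ultimately show ?thesis
      by (simp add: powr_deriv_def powr_weight_def)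
  next
    case 3
    then show ?thesis
      by (rule abs_add_powr_expansion_large[OF p])
  qed simp
qed

lemma powr_add_le_powr_of_add:
  fixes x y q :: real
  assumes "0 \<le> x" "0 \<le> y" "1 \<le> q"
  shows "x powr q + y powr q \<le> (x + y) powr q"
proof (cases "x + y = 0")
  case True
  then have "x = 0" "y = 0"
    using assms by auto
  then show ?thesis
    by simp
next
  case False
  define s where "s = x + y"
  have s: "s > 0"
    using False assms by (simp add: s_def)
  have le_frac: "z powr q \<le> s powr q * (z / s)" if "0 \<le> z" "z \<le> s" for z
  proof (cases "z = 0")
    case False
    have "z powr q = s powr q * (z / s) powr q"
      using s that by (simp add: powr_divide)
    also have "\<dots> \<le> s powr q * (z / s)"
      using s that False assms by (intro mult_left_mono powr_le_one_le) auto
    finally show ?thesis .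
  qed (use assms in simp)
  have "x powr q + y powr q \<le> s powr q * (x / s) + s powr q * (y / s)"
    using le_frac[of x] le_frac[of y] assms by (simp add: s_def)
  also have "\<dots> = s powr q"
    using s by (simp add: s_def add_divide_distrib[symmetric] ring_distribs[symmetric])
  finally show ?thesis
    by (simp add: s_def)
qed

lemma one_add_mult_le_powr:
  fixes x q :: real
  assumes "0 \<le> x" "1 \<le> q"
  shows "1 + q * x \<le> (1 + x) powr q"
proof -
  have "((1 + x) powr q) powr (1/q) * 1 powr (1 - 1/q) \<le> (1/q) * (1 + x) powr q + (1 - 1/q) * 1"
    using assms by (intro Youngs_inequality_0) auto
  moreover have "((1 + x) powr q) powr (1/q) = 1 + x"
    using assms by (simp add: powr_powr)
  ultimately have "q * (1 + x) \<le> q * ((1/q) * (1 + x) powr q + (1 - 1/q))"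
    using assms by (intro mult_left_mono) auto
  also have "\<dots> = (1 + x) powr q + q - 1"
    using assms by (simp add: field_simps)
  finally show ?thesis
    by (simp add: algebra_simps)
qed

lemma powr_add_powr_diff_le_powr_of_add:
  fixes x y q :: real
  assumes "0 \<le> x" "0 \<le> y" "1 \<le> q"
  shows "x powr q + x powr (q - 1) * y \<le> (x + y) powr q"
proof (cases "x = 0")
  case True
  then show ?thesis
    using assms by simp
next
  case False
  then have x: "x > 0"
    using assms by simp
  have "x powr q + x powr (q - 1) * y \<le> x powr q + q * (x powr (q - 1) * y)"
    using assms x mult_right_mono[of 1 q "x powr (q - 1) * y"] by simp
  also have "\<dots> = x powr q * (1 + q * (y / x))"
    using x by (simp add: powr_diff field_simps)
  also have "\<dots> \<le> x powr q * (1 + y / x) powr q"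
    using assms x by (intro mult_left_mono one_add_mult_le_powr) auto
  also have "\<dots> = (x * (1 + y / x)) powr q"
    using x assms by (simp add: powr_mult)
  also have "x * (1 + y / x) = x + y"
    using x by (simp add: field_simps)
  finally show ?thesis .
qed

lemma abs_add_powr_le:
  fixes s y p :: real
  assumes "0 \<le> p"
  shows "\<bar>s + y\<bar> powr p \<le> 2 powr p * (\<bar>s\<bar> powr p + \<bar>y\<bar> powr p)"
proof -
  have "\<bar>s + y\<bar> powr p \<le> (2 * max \<bar>s\<bar> \<bar>y\<bar>) powr p"
    using assms by (intro powr_mono2) auto
  also have "\<dots> = 2 powr p * max \<bar>s\<bar> \<bar>y\<bar> powr p"
    by (simp add: powr_mult)
  also have "\<dots> \<le> 2 powr p * (\<bar>s\<bar> powr p + \<bar>y\<bar> powr p)"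
    by (intro mult_left_mono) (auto simp: max_def)
  finally show ?thesis .
qed

lemma abs_powr_deriv_mult_le:
  assumes p: "2 \<le> p"
  shows "\<bar>powr_deriv p s * y\<bar> \<le> \<bar>s\<bar> powr p + \<bar>y\<bar> powr p"
proof (cases "s = 0")
  case False
  have e: "\<bar>powr_deriv p s * y\<bar> = \<bar>s\<bar> powr (p - 1) * \<bar>y\<bar>"
    using False by (simp add: powr_deriv_def abs_mult powr_diff)
  show ?thesis
  proof (cases "\<bar>s\<bar> \<le> \<bar>y\<bar>")
    case True
    have "\<bar>s\<bar> powr (p - 1) * \<bar>y\<bar> \<le> \<bar>y\<bar> powr (p - 1) * \<bar>y\<bar>"
      using True p by (intro mult_right_mono powr_mono2) auto
    also have "\<dots> = \<bar>y\<bar> powr p"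
      using True False by (simp add: powr_diff)
    finally show ?thesis
      using e powr_ge_zero[of "\<bar>s\<bar>" p] by linarith
  next
    case False
    have "\<bar>s\<bar> powr (p - 1) * \<bar>y\<bar> \<le> \<bar>s\<bar> powr (p - 1) * \<bar>s\<bar>"
      using False by (intro mult_left_mono) auto
    also have "\<dots> = \<bar>s\<bar> powr p"
      using False by (simp add: powr_diff)
    finally show ?thesis
      using e powr_ge_zero[of "\<bar>y\<bar>" p] by linarith
  qed
qed simp

lemma powr_weight_mult_le:
  assumes p: "2 \<le> p"
  shows "powr_weight p s * y\<^sup>2 \<le> \<bar>s\<bar> powr p + \<bar>y\<bar> powr p"
proof (cases "s = 0")
  case False
  show ?thesis
  proof (cases "\<bar>s\<bar> \<le> \<bar>y\<bar>")
    case True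
    have "powr_weight p s * y\<^sup>2 = \<bar>s\<bar> powr (p - 2) * y\<^sup>2"
      using False by (simp add: powr_weight_eq)
    also have "\<dots> \<le> \<bar>y\<bar> powr (p - 2) * y\<^sup>2"
      using True p by (intro mult_right_mono powr_mono2) auto
    also have "\<dots> = \<bar>y\<bar> powr p"
      using True False by (simp add: powr_diff powr_numeral)
    finally show ?thesis
      using powr_ge_zero[of "\<bar>s\<bar>" p] by linarith
  next
    case False
    have "powr_weight p s * y\<^sup>2 \<le> powr_weight p s * s\<^sup>2"
      using False powr_weight_nonneg[of p s] by (intro mult_left_mono) (auto simp: abs_le_square_iff)
    also have "\<dots> = \<bar>s\<bar> powr p"
      using False by (simp add: powr_weight_def)
    finally show ?thesis
      using powr_ge_zero[of "\<bar>y\<bar>" p] by linarith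
  qed
qed simp

text \<open>Young's inequality with exponents \<open>p / (p - 2)\<close> and \<open>p / 2\<close>, normalised by \<open>m\<close> and \<open>b\<close>;
  integrating it with \<open>m\<close>, \<open>b\<close> the \<open>p\<close>-th moments gives Hoelder's inequality below.\<close>
lemma powr_weight_mult_le_Young:
  fixes p m b s y :: real
  assumes p: "2 \<le> p" and m: "0 < m" and b: "0 < b"
  shows "powr_weight p s * y\<^sup>2 \<le> m powr (1 - 2/p) * b powr (2/p)
           * ((1 - 2/p) * (\<bar>s\<bar> powr p / m) + (2/p) * (\<bar>y\<bar> powr p / b))"
proof (cases "s = 0 \<or> y = 0")
  case True
  have "0 \<le> (1 - 2/p) * (\<bar>s\<bar> powr p / m) + (2/p) * (\<bar>y\<bar> powr p / b)"
    using p m b by (intro add_nonneg_nonneg mult_nonneg_nonneg) (auto simp: field_simps)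
  then have "0 \<le> m powr (1 - 2/p) * b powr (2/p)
      * ((1 - 2/p) * (\<bar>s\<bar> powr p / m) + (2/p) * (\<bar>y\<bar> powr p / b))"
    by simp
  then show ?thesis
    using True by auto
next
  case False
  have e1: "(\<bar>s\<bar> powr p / m) powr (1 - 2/p) = \<bar>s\<bar> powr (p - 2) / m powr (1 - 2/p)"
    using m p by (simp add: powr_divide powr_powr algebra_simps)
  have e2: "(\<bar>y\<bar> powr p / b) powr (2/p) = y\<^sup>2 / b powr (2/p)"
    using b p False by (simp add: powr_divide powr_powr powr_numeral)
  have "powr_weight p s * y\<^sup>2 = m powr (1 - 2/p) * b powr (2/p)
      * ((\<bar>s\<bar> powr p / m) powr (1 - 2/p) * (\<bar>y\<bar> powr p / b) powr (2/p))"
    unfolding e1 e2 using False m b by (simp add: powr_weight_eq)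
  also have "\<dots> \<le> m powr (1 - 2/p) * b powr (2/p)
      * ((1 - 2/p) * (\<bar>s\<bar> powr p / m) + (2/p) * (\<bar>y\<bar> powr p / b))"
    using p m b False by (intro mult_left_mono Youngs_inequality_0) (auto simp: field_simps)
  finally show ?thesis .
qed

section \<open>A moment inequality for martingale-type sums\<close>

lemma integral_powr_weight_le:
  fixes S D :: "'a \<Rightarrow> real"
  assumes p: "2 \<le> p" and [measurable]: "S \<in> borel_measurable M" "D \<in> borel_measurable M"
    and Si: "integrable M (\<lambda>\<omega>. \<bar>S \<omega>\<bar> powr p)" and Di: "integrable M (\<lambda>\<omega>. \<bar>D \<omega>\<bar> powr p)"
  shows "integrable M (\<lambda>\<omega>. powr_weight p (S \<omega>) * (D \<omega>)\<^sup>2)"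
    and "(\<integral>\<omega>. powr_weight p (S \<omega>) * (D \<omega>)\<^sup>2 \<partial>M)
          \<le> (\<integral>\<omega>. \<bar>S \<omega>\<bar> powr p \<partial>M) powr (1 - 2/p) * (\<integral>\<omega>. \<bar>D \<omega>\<bar> powr p \<partial>M) powr (2/p)"
proof -
  show int: "integrable M (\<lambda>\<omega>. powr_weight p (S \<omega>) * (D \<omega>)\<^sup>2)"
  proof (rule Bochner_Integration.integrable_bound[OF Bochner_Integration.integrable_add[OF Si Di]])
    show "(\<lambda>\<omega>. powr_weight p (S \<omega>) * (D \<omega>)\<^sup>2) \<in> borel_measurable M"
      unfolding powr_weight_def by measurable
    show "AE \<omega> in M. norm (powr_weight p (S \<omega>) * (D \<omega>)\<^sup>2) \<le> norm (\<bar>S \<omega>\<bar> powr p + \<bar>D \<omega>\<bar> powr p)"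
      using powr_weight_mult_le[OF p] powr_weight_nonneg by (auto intro!: AE_I2)
  qed
  define m where "m = (\<integral>\<omega>. \<bar>S \<omega>\<bar> powr p \<partial>M)"
  define b where "b = (\<integral>\<omega>. \<bar>D \<omega>\<bar> powr p \<partial>M)"
  have "0 \<le> m" "0 \<le> b"
    unfolding m_def b_def by (auto intro!: integral_nonneg_AE)
  then consider "m = 0 \<or> b = 0" | "m > 0" "b > 0"
    by linarith
  then show "(\<integral>\<omega>. powr_weight p (S \<omega>) * (D \<omega>)\<^sup>2 \<partial>M) \<le> m powr (1 - 2/p) * b powr (2/p)"
  proof cases
    case 1
    then have "AE \<omega> in M. \<bar>S \<omega>\<bar> powr p = 0 \<or> \<bar>D \<omega>\<bar> powr p = 0"
      using integral_nonneg_eq_0_iff_AE[OF Si] integral_nonneg_eq_0_iff_AE[OF Di] m_def b_def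
      by (auto elim: eventually_mono)
    then have "AE \<omega> in M. powr_weight p (S \<omega>) * (D \<omega>)\<^sup>2 = 0"
      by eventually_elim auto
    then show ?thesis
      by (simp add: integral_eq_zero_AE)
  next
    case 2
    define C where "C = m powr (1 - 2/p) * b powr (2/p)"
    have "(\<integral>\<omega>. powr_weight p (S \<omega>) * (D \<omega>)\<^sup>2 \<partial>M)
        \<le> (\<integral>\<omega>. C * ((1 - 2/p) * (\<bar>S \<omega>\<bar> powr p / m) + (2/p) * (\<bar>D \<omega>\<bar> powr p / b)) \<partial>M)"
      using int Si Di 2 powr_weight_mult_le_Young[OF p, of m b] unfolding C_def
      by (intro integral_mono) auto
    also have "\<dots> = C * ((1 - 2/p) * (m / m) + (2/p) * (b / b))"
      using Si Di by (simp add: m_def b_def)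
    also have "\<dots> = C"
      using 2 by simp
    finally show ?thesis
      unfolding C_def .
  qed
qed

lemma integral_abs_add_powr_le:
  fixes S D :: "'a \<Rightarrow> real"
  assumes p: "2 \<le> p" "p \<le> a" and [measurable]: "S \<in> borel_measurable M" "D \<in> borel_measurable M"
    and Si: "integrable M (\<lambda>\<omega>. \<bar>S \<omega>\<bar> powr p)" and Di: "integrable M (\<lambda>\<omega>. \<bar>D \<omega>\<bar> powr p)"
    and orth: "(\<integral>\<omega>. powr_deriv p (S \<omega>) * D \<omega> \<partial>M) = 0"
  shows "integrable M (\<lambda>\<omega>. \<bar>S \<omega> + D \<omega>\<bar> powr p)"
    and "(\<integral>\<omega>. \<bar>S \<omega> + D \<omega>\<bar> powr p \<partial>M) \<le> (\<integral>\<omega>. \<bar>S \<omega>\<bar> powr p \<partial>M)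
           + expansion_const a * ((\<integral>\<omega>. \<bar>S \<omega>\<bar> powr p \<partial>M) powr (1 - 2/p) * (\<integral>\<omega>. \<bar>D \<omega>\<bar> powr p \<partial>M) powr (2/p)
                                  + (\<integral>\<omega>. \<bar>D \<omega>\<bar> powr p \<partial>M))"
proof -
  show int: "integrable M (\<lambda>\<omega>. \<bar>S \<omega> + D \<omega>\<bar> powr p)"
  proof (rule Bochner_Integration.integrable_bound)
    show "integrable M (\<lambda>\<omega>. 2 powr p * (\<bar>S \<omega>\<bar> powr p + \<bar>D \<omega>\<bar> powr p))"
      using Si Di by auto
    show "AE \<omega> in M. norm (\<bar>S \<omega> + D \<omega>\<bar> powr p) \<le> norm (2 powr p * (\<bar>S \<omega>\<bar> powr p + \<bar>D \<omega>\<bar> powr p))"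
      using abs_add_powr_le[of p] p by (auto intro!: AE_I2)
  qed measurable
  have int_deriv: "integrable M (\<lambda>\<omega>. powr_deriv p (S \<omega>) * D \<omega>)"
  proof (rule Bochner_Integration.integrable_bound[OF Bochner_Integration.integrable_add[OF Si Di]])
    show "(\<lambda>\<omega>. powr_deriv p (S \<omega>) * D \<omega>) \<in> borel_measurable M"
      unfolding powr_deriv_def by measurable
    show "AE \<omega> in M. norm (powr_deriv p (S \<omega>) * D \<omega>) \<le> norm (\<bar>S \<omega>\<bar> powr p + \<bar>D \<omega>\<bar> powr p)"
      using abs_powr_deriv_mult_le[OF p(1)] by (auto intro!: AE_I2)
  qed
  note weight = integral_powr_weight_le[OF p(1) assms(3,4) Si Di]
  have L: "0 \<le> expansion_const a"
    using expansion_const_ge(3)[OF p] by simp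
  have "(\<integral>\<omega>. \<bar>S \<omega> + D \<omega>\<bar> powr p \<partial>M)
      \<le> (\<integral>\<omega>. \<bar>S \<omega>\<bar> powr p + p * (powr_deriv p (S \<omega>) * D \<omega>)
            + expansion_const a * (powr_weight p (S \<omega>) * (D \<omega>)\<^sup>2 + \<bar>D \<omega>\<bar> powr p) \<partial>M)"
    using int int_deriv weight(1) Si Di abs_add_powr_expansion[OF p]
    by (intro integral_mono) (auto simp: mult.assoc)
  also have "\<dots> = (\<integral>\<omega>. \<bar>S \<omega>\<bar> powr p \<partial>M) + p * (\<integral>\<omega>. powr_deriv p (S \<omega>) * D \<omega> \<partial>M)
      + expansion_const a * ((\<integral>\<omega>. powr_weight p (S \<omega>) * (D \<omega>)\<^sup>2 \<partial>M) + (\<integral>\<omega>. \<bar>D \<omega>\<bar> powr p \<partial>M))"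
    using int_deriv weight(1) Si Di by simp
  also have "\<dots> \<le> (\<integral>\<omega>. \<bar>S \<omega>\<bar> powr p \<partial>M)
      + expansion_const a * ((\<integral>\<omega>. \<bar>S \<omega>\<bar> powr p \<partial>M) powr (1 - 2/p) * (\<integral>\<omega>. \<bar>D \<omega>\<bar> powr p \<partial>M) powr (2/p)
                             + (\<integral>\<omega>. \<bar>D \<omega>\<bar> powr p \<partial>M))"
    using orth weight(2) L by (simp add: mult_left_mono)
  finally show "(\<integral>\<omega>. \<bar>S \<omega> + D \<omega>\<bar> powr p \<partial>M) \<le> \<dots>" .
qed

definition martingale_const :: "real \<Rightarrow> real" where
  "martingale_const a = (2 * expansion_const a) powr a"

lemma martingale_const_ge:
  assumes "2 \<le> p" "p \<le> a"
  shows "2 * expansion_const a \<le> martingale_const a powr (1 / (p / 2))"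
    and "2 * expansion_const a \<le> martingale_const a"
    and "1 \<le> martingale_const a"
proof -
  have L: "1 \<le> expansion_const a"
    using expansion_const_ge[OF assms] by simp
  have "(2 * expansion_const a) powr 1 \<le> (2 * expansion_const a) powr (a * (2 / p))"
    using L assms by (intro powr_mono) (auto simp: field_simps)
  then show "2 * expansion_const a \<le> martingale_const a powr (1 / (p / 2))"
    using L by (simp add: martingale_const_def powr_powr)
  have "(2 * expansion_const a) powr 1 \<le> martingale_const a"
    unfolding martingale_const_def using L assms by (intro powr_mono) auto
  then show "2 * expansion_const a \<le> martingale_const a"
    using L by simp
  then show "1 \<le> martingale_const a"
    using L by simp
qed

text \<open>The inductive step of the martingale moment bound, with \<open>q = p / 2\<close>, \<open>m\<close> the current
  \<open>p\<close>-th moment, \<open>B\<close> the sum of the squared \<open>L\<^sup>p\<close>-norms of the increments so far and \<open>c\<close> that of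
  the next one.\<close>
lemma martingale_step_le:
  fixes K L q m B c :: real
  assumes q: "1 \<le> q" and L: "1 \<le> L" and K1: "2 * L \<le> K powr (1/q)" and K2: "2 * L \<le> K"
    and m: "0 \<le> m" "m \<le> K * B powr q" and B: "0 \<le> B" and c: "0 \<le> c"
  shows "m + L * (m powr (1 - 1/q) * c + c powr q) \<le> K * (B + c) powr q"
proof -
  have Kp: "K > 0"
    using K2 L by simp
  have "m powr (1 - 1/q) \<le> (K * B powr q) powr (1 - 1/q)"
    using m q by (intro powr_mono2) (auto simp: field_simps)
  also have "\<dots> = K powr (1 - 1/q) * B powr (q - 1)"
    using Kp B q by (simp add: powr_mult powr_powr algebra_simps)
  finally have m1: "m powr (1 - 1/q) \<le> K powr (1 - 1/q) * B powr (q - 1)" .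
  have "L * K * 2 \<le> K * K powr (1/q)"
    using K1 Kp by (simp add: mult.commute mult_left_mono)
  then have LK: "L * K powr (1 - 1/q) \<le> K / 2"
    using Kp by (simp add: powr_diff field_simps)
  have "L * (m powr (1 - 1/q) * c) \<le> L * (K powr (1 - 1/q) * B powr (q - 1) * c)"
    using m1 L c by (intro mult_left_mono mult_right_mono) auto
  also have "\<dots> \<le> K / 2 * (B powr (q - 1) * c)"
    using mult_right_mono[OF LK, of "B powr (q - 1) * c"] c by (simp add: mult_ac)
  finally have t1: "L * (m powr (1 - 1/q) * c) \<le> K / 2 * (B powr (q - 1) * c)" .
  have t2: "L * c powr q \<le> K / 2 * c powr q"
    using K2 by (intro mult_right_mono) auto
  have "B powr q + (B powr (q - 1) * c + c powr q) / 2 \<le> (B + c) powr q"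
    using add_mono[OF powr_add_le_powr_of_add[OF B c q] powr_add_powr_diff_le_powr_of_add[OF B c q]]
    by (simp add: field_simps)
  then have "K * (B powr q + (B powr (q - 1) * c + c powr q) / 2) \<le> K * (B + c) powr q"
    using Kp by (intro mult_left_mono) auto
  then show ?thesis
    using m t1 t2 by (simp add: field_simps)
qed

text \<open>A Burkholder-type inequality, in which the orthogonality hypothesis \<open>orth\<close> replaces the
  martingale property.\<close>
lemma martingale_moment_bound:
  fixes S D :: "nat \<Rightarrow> 'a \<Rightarrow> real"
  assumes p: "2 \<le> p" "p \<le> a"
    and S0: "\<And>\<omega>. S 0 \<omega> = 0"
    and S_Suc: "\<And>k \<omega>. S (Suc k) \<omega> = S k \<omega> + D k \<omega>"
    and D_meas: "\<And>k. k < n \<Longrightarrow> D k \<in> borel_measurable M"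
    and D_int: "\<And>k. k < n \<Longrightarrow> integrable M (\<lambda>\<omega>. \<bar>D k \<omega>\<bar> powr p)"
    and orth: "\<And>k. k < n \<Longrightarrow> integrable M (\<lambda>\<omega>. \<bar>S k \<omega>\<bar> powr p) \<Longrightarrow>
                 (\<integral>\<omega>. powr_deriv p (S k \<omega>) * D k \<omega> \<partial>M) = 0"
  shows "integrable M (\<lambda>\<omega>. \<bar>S n \<omega>\<bar> powr p)"
    and "(\<integral>\<omega>. \<bar>S n \<omega>\<bar> powr p \<partial>M)
           \<le> martingale_const a * (\<Sum>k<n. (\<integral>\<omega>. \<bar>D k \<omega>\<bar> powr p \<partial>M) powr (2/p)) powr (p/2)"
proof -
  define L where "L = expansion_const a"
  define K where "K = martingale_const a"
  have L1: "1 \<le> L"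
    using expansion_const_ge[OF p] by (simp add: L_def)
  have K: "2 * L \<le> K powr (1 / (p/2))" "2 * L \<le> K"
    using martingale_const_ge[OF p] by (auto simp: L_def K_def)
  define \<beta> where "\<beta> k = (\<integral>\<omega>. \<bar>D k \<omega>\<bar> powr p \<partial>M)" for k
  have \<beta>0: "0 \<le> \<beta> k" for k
    unfolding \<beta>_def by (intro integral_nonneg_AE) auto
  have "S k \<in> borel_measurable M \<and> integrable M (\<lambda>\<omega>. \<bar>S k \<omega>\<bar> powr p) \<and>
        (\<integral>\<omega>. \<bar>S k \<omega>\<bar> powr p \<partial>M) \<le> K * (\<Sum>l<k. \<beta> l powr (2/p)) powr (p/2)" if "k \<le> n" for k
    using that
  proof (induction k)
    case 0
    then show ?case
      using p by (simp add: S0)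
  next
    case (Suc k)
    then have k: "k < n" and IH: "S k \<in> borel_measurable M" "integrable M (\<lambda>\<omega>. \<bar>S k \<omega>\<bar> powr p)"
      "(\<integral>\<omega>. \<bar>S k \<omega>\<bar> powr p \<partial>M) \<le> K * (\<Sum>l<k. \<beta> l powr (2/p)) powr (p/2)"
      by auto
    have S_Suc': "S (Suc k) = (\<lambda>\<omega>. S k \<omega> + D k \<omega>)"
      using S_Suc by auto
    note step = integral_abs_add_powr_le[OF p IH(1) D_meas[OF k] IH(2) D_int[OF k] orth[OF k IH(2)]]
    define m where "m = (\<integral>\<omega>. \<bar>S k \<omega>\<bar> powr p \<partial>M)"
    have "0 \<le> m"
      unfolding m_def by (intro integral_nonneg_AE) auto
    have "(\<integral>\<omega>. \<bar>S (Suc k) \<omega>\<bar> powr p \<partial>M)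
        \<le> m + L * (m powr (1 - 1/(p/2)) * \<beta> k powr (2/p) + (\<beta> k powr (2/p)) powr (p/2))"
      using step(2) \<beta>0[of k] p by (simp add: S_Suc' m_def L_def \<beta>_def powr_powr)
    also have "\<dots> \<le> K * ((\<Sum>l<k. \<beta> l powr (2/p)) + \<beta> k powr (2/p)) powr (p/2)"
      by (rule martingale_step_le) (use p L1 K \<open>0 \<le> m\<close> IH(3) in \<open>auto simp: m_def intro!: sum_nonneg\<close>)
    finally show ?case
      using IH(1) D_meas[OF k] step(1) by (simp add: S_Suc' add.commute)
  qed
  from this[of n] show "integrable M (\<lambda>\<omega>. \<bar>S n \<omega>\<bar> powr p)"
    and "(\<integral>\<omega>. \<bar>S n \<omega>\<bar> powr p \<partial>M)
           \<le> martingale_const a * (\<Sum>k<n. (\<integral>\<omega>. \<bar>D k \<omega>\<bar> powr p \<partial>M) powr (2/p)) powr (p/2)"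
    by (simp_all add: K_def \<beta>_def)
qed

section \<open>Splitting off the largest index\<close>

definition insert_nth :: "nat \<Rightarrow> 'a \<Rightarrow> 'a list \<Rightarrow> 'a list" where
  "insert_nth j k ks = take j ks @ k # drop j ks"

text \<open>The coefficient tensor of \<open>x\<^sub>k\<close> once the largest index \<open>k\<close> has been singled out: it sums
  the entries of \<open>A\<close> over all positions at which \<open>k\<close> can occur.\<close>
definition top_slice :: "(nat list \<Rightarrow> real) \<Rightarrow> nat \<Rightarrow> nat list \<Rightarrow> real" where
  "top_slice A k ks = (\<Sum>j\<le>length ks. A (insert_nth j k ks))"

definition multilinear_form :: "nat \<Rightarrow> nat \<Rightarrow> (nat list \<Rightarrow> real) \<Rightarrow> (nat \<Rightarrow> real) \<Rightarrow> real" where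
  "multilinear_form n d A x = (\<Sum>ks\<in>tensor_indices n d. A ks * prod_list (map x ks))"

definition top_triples :: "nat \<Rightarrow> nat \<Rightarrow> (nat \<times> nat list \<times> nat) set" where
  "top_triples n e = (SIGMA k:{..<n}. SIGMA ks:tensor_indices k e. {..e})"

definition insert_triple :: "nat \<times> nat list \<times> nat \<Rightarrow> nat list" where
  "insert_triple t = (case t of (k, ks, j) \<Rightarrow> insert_nth j k ks)"

lemma finite_tensor_indices [simp]: "finite (tensor_indices n d)"
proof -
  have "tensor_indices n d = {xs. set xs \<subseteq> {..<n} \<and> length xs = d}"
    by (auto simp: tensor_indices_def)
  then show ?thesis
    using finite_lists_length_eq[of "{..<n}" d] by simp
qed

lemma tensor_indices_0: "tensor_indices n 0 = {[]}"
  by (auto simp: tensor_indices_def)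

lemma finite_top_triples [simp]: "finite (top_triples n e)"
  unfolding top_triples_def by (intro finite_SigmaI) auto

lemma chaos_eq_multilinear_form: "chaos n d A X \<omega> = multilinear_form n d A (\<lambda>i. X i \<omega>)"
  unfolding chaos_def multilinear_form_def
  by (intro sum.cong refl) (simp add: tensor_indices_def prod.list_conv_set_nth atLeast0LessThan)

lemma prod_list_insert_nth:
  fixes x :: "'a \<Rightarrow> 'b :: comm_monoid_mult"
  shows "prod_list (map x (insert_nth j k ks)) = x k * prod_list (map x ks)"
proof -
  have "prod_list (map x ks) = prod_list (map x (take j ks)) * prod_list (map x (drop j ks))"
    by (metis append_take_drop_id map_append prod_list.append)
  then show ?thesis
    unfolding insert_nth_def by (simp add: mult.left_commute)
qed

lemma set_insert_nth: "set (insert_nth j k ks) = insert k (set ks)"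
proof -
  have "set ks = set (take j ks @ drop j ks)"
    by simp
  then show ?thesis
    unfolding insert_nth_def by (simp only: set_append list.set) auto
qed

lemma length_insert_nth: "j \<le> length ks \<Longrightarrow> length (insert_nth j k ks) = Suc (length ks)"
  by (simp add: insert_nth_def)

lemma distinct_insert_nthD: "distinct (insert_nth j k ks) \<Longrightarrow> distinct ks"
  unfolding insert_nth_def
  by (subst append_take_drop_id[of j, symmetric], simp del: append_take_drop_id)

lemma insert_triple_in_tensor_indices:
  "t \<in> top_triples n e \<Longrightarrow> insert_triple t \<in> tensor_indices n (Suc e)"
  by (auto simp: top_triples_def insert_triple_def tensor_indices_def set_insert_nth length_insert_nth)

text \<open>The triple is recovered from the list: \<open>k\<close> is its maximum, which occurs exactly once.\<close>
lemma inj_on_insert_triple: "inj_on insert_triple (top_triples n e)"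
proof (rule inj_on_inverseI)
  fix t
  assume "t \<in> top_triples n e"
  then obtain k ks j where t: "t = (k, ks, j)" and ks: "ks \<in> tensor_indices k e" and j: "j \<le> e"
    by (auto simp: top_triples_def)
  have lt: "\<forall>x\<in>set ks. x < k"
    using ks by (auto simp: tensor_indices_def)
  have "k \<notin> set (take j ks)" "k \<notin> set (drop j ks)"
    using lt by (auto dest: in_set_takeD in_set_dropD)
  moreover have "Max (set (insert_nth j k ks)) = k"
    using lt by (auto simp: set_insert_nth intro!: Max_eqI)
  moreover have "length (takeWhile (\<lambda>x. x \<noteq> k) (insert_nth j k ks)) = j"
    using ks j \<open>k \<notin> set (take j ks)\<close> unfolding insert_nth_def
    by (subst takeWhile_append2) (auto simp: tensor_indices_def)
  ultimately show "(\<lambda>L. let k = Max (set L) in (k, remove1 k L, length (takeWhile (\<lambda>x. x \<noteq> k) L)))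
      (insert_triple t) = t"
    by (simp add: t insert_triple_def insert_nth_def remove1_append Let_def)
qed

lemma distinct_in_insert_triple_image:
  assumes js: "js \<in> tensor_indices n (Suc e)" and d: "distinct js"
  shows "js \<in> insert_triple ` top_triples n e"
proof -
  define k where "k = Max (set js)"
  have "js \<noteq> []"
    using js by (auto simp: tensor_indices_def)
  then have "k \<in> set js"
    by (simp add: k_def)
  then obtain ys zs where js_eq: "js = ys @ k # zs"
    using split_list by metis
  have "\<forall>x\<in>set (ys @ zs). x < k"
  proof
    fix x
    assume x: "x \<in> set (ys @ zs)"
    then have "x \<in> set js" "x \<noteq> k"
      using d js_eq by auto
    moreover have "x \<le> k"
      unfolding k_def using \<open>x \<in> set js\<close> by simp
    ultimately show "x < k"
      by simp
  qed
  then have "(k, ys @ zs, length ys) \<in> top_triples n e"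
    using js js_eq by (auto simp: top_triples_def tensor_indices_def)
  moreover have "insert_triple (k, ys @ zs, length ys) = js"
    by (simp add: insert_triple_def insert_nth_def js_eq)
  ultimately show ?thesis
    by force
qed

text \<open>Every multi-index without repetitions arises uniquely by inserting its largest entry into
  a shorter one.\<close>
lemma sum_insert_triple:
  assumes "\<And>js. js \<in> tensor_indices n (Suc e) \<Longrightarrow> \<not> distinct js \<Longrightarrow> g js = 0"
  shows "(\<Sum>k<n. \<Sum>ks\<in>tensor_indices k e. \<Sum>j\<le>e. g (insert_nth j k ks))
           = (\<Sum>js\<in>tensor_indices n (Suc e). g js)"
proof -
  have "(\<Sum>k<n. \<Sum>ks\<in>tensor_indices k e. \<Sum>j\<le>e. g (insert_nth j k ks))
      = (\<Sum>t\<in>top_triples n e. g (insert_triple t))"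
    unfolding top_triples_def by (simp add: sum.Sigma split_def insert_triple_def)
  also have "\<dots> = (\<Sum>js\<in>insert_triple ` top_triples n e. g js)"
    using sum.reindex[OF inj_on_insert_triple, of g] by simp
  also have "\<dots> = (\<Sum>js\<in>tensor_indices n (Suc e). g js)"
  proof (rule sum.mono_neutral_left)
    show "insert_triple ` top_triples n e \<subseteq> tensor_indices n (Suc e)"
      using insert_triple_in_tensor_indices by auto
    show "\<forall>js\<in>tensor_indices n (Suc e) - insert_triple ` top_triples n e. g js = 0"
      using assms distinct_in_insert_triple_image by blast
  qed auto
  finally show ?thesis .
qed

lemma multilinear_form_Suc:
  assumes "gen_diag_zero n (Suc e) A"
  shows "multilinear_form n (Suc e) A x = (\<Sum>k<n. x k * multilinear_form k e (top_slice A k) x)"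
proof -
  have "(\<Sum>k<n. x k * multilinear_form k e (top_slice A k) x)
      = (\<Sum>k<n. \<Sum>ks\<in>tensor_indices k e. \<Sum>j\<le>e.
           A (insert_nth j k ks) * prod_list (map x (insert_nth j k ks)))"
    unfolding multilinear_form_def top_slice_def
    by (intro sum.cong refl) (auto simp: sum_distrib_left sum_distrib_right prod_list_insert_nth
        tensor_indices_def mult_ac intro!: sum.cong)
  also have "\<dots> = multilinear_form n (Suc e) A x"
    unfolding multilinear_form_def
    by (rule sum_insert_triple) (use assms in \<open>simp add: gen_diag_zero_def\<close>)
  finally show ?thesis
    by simp
qed

lemma gen_diag_zero_top_slice:
  assumes A: "gen_diag_zero n (Suc e) A" and k: "k < n"
  shows "gen_diag_zero k e (top_slice A k)"
  unfolding gen_diag_zero_def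
proof (intro ballI impI)
  fix ks
  assume ks: "ks \<in> tensor_indices k e" and nd: "\<not> distinct ks"
  have "A (insert_nth j k ks) = 0" if "j \<le> length ks" for j
  proof -
    have "(k, ks, j) \<in> top_triples n e"
      using ks k that by (auto simp: top_triples_def tensor_indices_def)
    then have "insert_nth j k ks \<in> tensor_indices n (Suc e)"
      using insert_triple_in_tensor_indices[of "(k, ks, j)"] by (simp add: insert_triple_def)
    moreover have "\<not> distinct (insert_nth j k ks)"
      using nd distinct_insert_nthD[of j k ks] by blast
    ultimately show ?thesis
      using A by (simp add: gen_diag_zero_def)
  qed
  then show "top_slice A k ks = 0"
    by (simp add: top_slice_def)
qed

lemma hs_norm_nonneg: "0 \<le> hs_norm n d A"
  by (simp add: hs_norm_def sum_nonneg)

lemma hs_norm_sq: "(hs_norm n d A)\<^sup>2 = (\<Sum>ks\<in>tensor_indices n d. (A ks)\<^sup>2)"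
  unfolding hs_norm_def by (simp add: sum_nonneg)

lemma sum_hs_norm_top_slice_le:
  assumes A: "gen_diag_zero n (Suc e) A"
  shows "(\<Sum>k<n. (hs_norm k e (top_slice A k))\<^sup>2) \<le> real (Suc e) * (hs_norm n (Suc e) A)\<^sup>2"
proof -
  have CS: "(top_slice A k ks)\<^sup>2 \<le> real (Suc e) * (\<Sum>j\<le>e. (A (insert_nth j k ks))\<^sup>2)"
    if "ks \<in> tensor_indices k e" for k ks
  proof -
    have "(top_slice A k ks)\<^sup>2 = (\<Sum>j\<le>e. A (insert_nth j k ks) * 1)\<^sup>2"
      using that by (simp add: top_slice_def tensor_indices_def)
    also have "\<dots> \<le> (\<Sum>j\<le>e. (A (insert_nth j k ks))\<^sup>2) * (\<Sum>j\<le>e. 1\<^sup>2)"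
      by (rule Cauchy_Schwarz_ineq_sum)
    finally show ?thesis
      by (simp add: mult.commute)
  qed
  have "(\<Sum>k<n. (hs_norm k e (top_slice A k))\<^sup>2)
      \<le> (\<Sum>k<n. \<Sum>ks\<in>tensor_indices k e. real (Suc e) * (\<Sum>j\<le>e. (A (insert_nth j k ks))\<^sup>2))"
    unfolding hs_norm_sq using CS by (intro sum_mono) auto
  also have "\<dots> = real (Suc e) * (\<Sum>k<n. \<Sum>ks\<in>tensor_indices k e. \<Sum>j\<le>e. (A (insert_nth j k ks))\<^sup>2)"
    by (simp add: sum_distrib_left)
  also have "(\<Sum>k<n. \<Sum>ks\<in>tensor_indices k e. \<Sum>j\<le>e. (A (insert_nth j k ks))\<^sup>2) = (hs_norm n (Suc e) A)\<^sup>2"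
    unfolding hs_norm_sq by (rule sum_insert_triple) (use A in \<open>simp add: gen_diag_zero_def\<close>)
  finally show ?thesis .
qed

section \<open>Moments from tail bounds\<close>

lemma ennreal_abs_powr_le_shells:
  fixes b p y :: real
  assumes b: "b > 0" and p: "0 \<le> p"
  shows "ennreal (\<bar>y\<bar> powr p) \<le> ennreal (b powr p) +
     (\<Sum>k. ennreal ((b * exp (real k + 1)) powr p) * indicator {z. b * exp (real k) \<le> \<bar>z\<bar>} y)"
proof (cases "\<bar>y\<bar> < b")
  case True
  then have "ennreal (\<bar>y\<bar> powr p) \<le> ennreal (b powr p)"
    using p by (intro ennreal_leI powr_mono2) auto
  then show ?thesis
    by (rule order_trans) simp
next
  case False
  define f where "f k = ennreal ((b * exp (real k + 1)) powr p) * indicator {z. b * exp (real k) \<le> \<bar>z\<bar>} y"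
    for k :: nat
  define r where "r = ln (\<bar>y\<bar> / b)"
  define k where "k = nat \<lfloor>r\<rfloor>"
  have "0 \<le> r"
    using False b by (simp add: r_def)
  then have k: "real k \<le> r" "r < real k + 1"
    by (auto simp: k_def)
  have y: "\<bar>y\<bar> = b * exp r"
    using False b by (simp add: r_def)
  have "b * exp (real k) \<le> \<bar>y\<bar>"
    using k b y by simp
  then have "f k = ennreal ((b * exp (real k + 1)) powr p)"
    by (simp add: f_def)
  moreover have "\<bar>y\<bar> powr p \<le> (b * exp (real k + 1)) powr p"
    using k b y p by (intro powr_mono2) auto
  ultimately have "ennreal (\<bar>y\<bar> powr p) \<le> f k"
    by (simp add: ennreal_leI)
  also have "\<dots> \<le> suminf f"
    using sum_le_suminf[of f "{k}"] by (auto intro: summableI)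
  finally show ?thesis
    unfolding f_def by (rule order_trans) simp
qed

definition tail_moment_const :: "real \<Rightarrow> real" where
  "tail_moment_const a = 1 + exp a"

lemma geometric_tail_sum_le:
  fixes a p :: real
  assumes p: "0 \<le> p" "p < a" and a: "1 \<le> a"
  shows "1 + exp p * (1 / (1 - exp (- (a - p)))) \<le> tail_moment_const a * (a / (a - p))"
proof -
  define \<epsilon> where "\<epsilon> = a - p"
  have e: "\<epsilon> > 0"
    using p by (simp add: \<epsilon>_def)
  have "1 / (1 - exp (- \<epsilon>)) = exp \<epsilon> / (exp \<epsilon> - 1)"
    using e by (simp add: exp_minus field_simps)
  also have "\<dots> \<le> exp \<epsilon> / \<epsilon>"
    using e exp_ge_add_one_self[of \<epsilon>] by (intro divide_left_mono) (auto simp: algebra_simps)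
  finally have "exp p * (1 / (1 - exp (- \<epsilon>))) \<le> exp p * (exp \<epsilon> / \<epsilon>)"
    by (intro mult_left_mono) auto
  also have "\<dots> = exp a / \<epsilon>"
    by (simp add: \<epsilon>_def mult_exp_exp)
  also have "\<dots> \<le> exp a * (a / \<epsilon>)"
    using e a by (simp add: divide_right_mono field_simps)
  finally have "exp p * (1 / (1 - exp (- \<epsilon>))) \<le> exp a * (a / \<epsilon>)" .
  moreover have "1 \<le> a / \<epsilon>"
    using e p by (simp add: \<epsilon>_def field_simps)
  moreover have "(1 + exp a) * (a / \<epsilon>) = a / \<epsilon> + exp a * (a / \<epsilon>)"
    by (simp add: distrib_right add_divide_distrib)
  ultimately show ?thesis
    unfolding tail_moment_const_def \<epsilon>_def[symmetric] by linarith
qed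

text \<open>Summing over the shells \<open>b e\<^sup>k \<le> \<bar>Y\<bar> < b e\<^sup>k\<^sup>+\<^sup>1\<close>, the tail bound makes the contributions decay
  geometrically with ratio \<open>exp (p - a)\<close>.\<close>
lemma (in prob_space) nn_integral_abs_powr_le_of_tail:
  fixes Y :: "'a \<Rightarrow> real"
  assumes Y: "Y \<in> borel_measurable M" and b: "b > 0" and p: "0 \<le> p" "p < a"
    and tail: "\<And>t. t \<ge> b \<Longrightarrow> measure M {\<omega>\<in>space M. \<bar>Y \<omega>\<bar> \<ge> t} \<le> (b / t) powr a"
  shows "(\<integral>\<^sup>+\<omega>. ennreal (\<bar>Y \<omega>\<bar> powr p) \<partial>M)
           \<le> ennreal (b powr p * (1 + exp p * (1 / (1 - exp (- (a - p))))))"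
proof -
  define A where "A k = {\<omega>\<in>space M. b * exp (real k) \<le> \<bar>Y \<omega>\<bar>}" for k :: nat
  define c where "c k = (b * exp (real k + 1)) powr p" for k :: nat
  define q where "q = exp (- (a - p))"
  have q: "0 < q" "q < 1"
    using p by (auto simp: q_def)
  have A_sets: "A k \<in> sets M" for k
    unfolding A_def using Y by measurable
  have c_A: "c k * measure M (A k) \<le> b powr p * exp p * q ^ k" for k
  proof -
    have "measure M (A k) \<le> (b / (b * exp (real k))) powr a"
      unfolding A_def using b by (intro tail) (simp add: mult_le_cancel_left1)
    also have "\<dots> = exp (- real k * a)"
      using b by (simp add: powr_def ln_div exp_minus field_simps)
    finally have "c k * measure M (A k) \<le> c k * exp (- real k * a)"
      by (intro mult_left_mono) (auto simp: c_def)
    also have "\<dots> = b powr p * exp p * q ^ k"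
      using b by (simp add: c_def q_def powr_mult exp_powr_real exp_of_nat_mult[symmetric]
          mult_exp_exp algebra_simps)
    finally show ?thesis .
  qed
  have "(\<integral>\<^sup>+\<omega>. ennreal (\<bar>Y \<omega>\<bar> powr p) \<partial>M)
      \<le> (\<integral>\<^sup>+\<omega>. ennreal (b powr p) + (\<Sum>k. ennreal (c k) * indicator (A k) \<omega>) \<partial>M)"
    using ennreal_abs_powr_le_shells[OF b p(1)]
    by (intro nn_integral_mono) (simp add: A_def c_def indicator_def)
  also have "\<dots> = ennreal (b powr p) + (\<Sum>k. ennreal (c k) * emeasure M (A k))"
    using A_sets by (simp add: nn_integral_add nn_integral_suminf nn_integral_cmult_indicator emeasure_space_1)
  also have "(\<Sum>k. ennreal (c k) * emeasure M (A k)) \<le> (\<Sum>k. ennreal (b powr p * exp p * q ^ k))"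
    using c_A by (intro suminf_le allI)
      (auto simp: emeasure_eq_measure ennreal_mult[symmetric] c_def intro!: ennreal_leI summableI)
  also have "(\<Sum>k. ennreal (b powr p * exp p * q ^ k)) = ennreal (b powr p * exp p * (1 / (1 - q)))"
    using q by (subst suminf_ennreal2)
      (auto simp: suminf_mult suminf_geometric intro!: summable_mult summable_geometric)
  finally show ?thesis
    using q by (simp add: q_def ennreal_plus[symmetric] algebra_simps del: ennreal_plus)
qed

lemma (in prob_space) moment_le_of_tail:
  fixes Y :: "'a \<Rightarrow> real"
  assumes Y: "Y \<in> borel_measurable M" and b: "b > 0" and p: "0 \<le> p" "p < a" and a: "1 \<le> a"
    and tail: "\<And>t. t \<ge> b \<Longrightarrow> measure M {\<omega>\<in>space M. \<bar>Y \<omega>\<bar> \<ge> t} \<le> (b / t) powr a"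
  shows "integrable M (\<lambda>\<omega>. \<bar>Y \<omega>\<bar> powr p)"
    and "(\<integral>\<omega>. \<bar>Y \<omega>\<bar> powr p \<partial>M) \<le> b powr p * tail_moment_const a * (a / (a - p))"
proof -
  define q where "q = exp (- (a - p))"
  have q: "q < 1"
    using p by (simp add: q_def)
  note nn = nn_integral_abs_powr_le_of_tail[OF Y b p tail, folded q_def]
  show int: "integrable M (\<lambda>\<omega>. \<bar>Y \<omega>\<bar> powr p)"
    using nn Y by (intro integrableI_bounded) (auto simp: le_less_trans)
  have "ennreal (\<integral>\<omega>. \<bar>Y \<omega>\<bar> powr p \<partial>M) \<le> ennreal (b powr p * (1 + exp p * (1 / (1 - q))))"
    using nn nn_integral_eq_integral[OF int] by simp
  then have "(\<integral>\<omega>. \<bar>Y \<omega>\<bar> powr p \<partial>M) \<le> b powr p * (1 + exp p * (1 / (1 - q)))"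
    using q by (subst (asm) ennreal_le_iff) (auto intro!: add_nonneg_nonneg)
  also have "\<dots> \<le> b powr p * (tail_moment_const a * (a / (a - p)))"
    using geometric_tail_sum_le[OF p a] by (intro mult_left_mono) (auto simp: q_def)
  finally show "(\<integral>\<omega>. \<bar>Y \<omega>\<bar> powr p \<partial>M) \<le> b powr p * tail_moment_const a * (a / (a - p))"
    by (simp add: mult.assoc)
qed

section \<open>Independence of the increments\<close>

lemma borel_measurable_multilinear_form:
  fixes f :: "nat \<Rightarrow> 'b \<Rightarrow> real"
  assumes "\<And>i. i < l \<Longrightarrow> f i \<in> borel_measurable N"
  shows "(\<lambda>\<omega>. multilinear_form l e B (\<lambda>i. f i \<omega>)) \<in> borel_measurable N"
  unfolding multilinear_form_def
proof (rule borel_measurable_sum)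
  fix ks
  assume ks: "ks \<in> tensor_indices l e"
  have "(\<lambda>\<omega>. \<Prod>j\<in>{0..<length ks}. f (ks ! j) \<omega>) \<in> borel_measurable N"
    using ks assms by (auto simp: tensor_indices_def subset_iff intro!: borel_measurable_prod)
  then show "(\<lambda>\<omega>. B ks * prod_list (map (\<lambda>i. f i \<omega>) ks)) \<in> borel_measurable N"
    by (simp add: prod.list_conv_set_nth)
qed

lemma multilinear_form_restrict:
  assumes "l \<le> j"
  shows "multilinear_form l e B (restrict x {..<j}) = multilinear_form l e B x"
  unfolding multilinear_form_def
proof (intro sum.cong refl)
  fix ks
  assume "ks \<in> tensor_indices l e"
  then have "map (restrict x {..<j}) ks = map x ks"
    using assms by (auto simp: tensor_indices_def)
  then show "B ks * prod_list (map (restrict x {..<j}) ks) = B ks * prod_list (map x ks)"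
    by (simp only:)
qed

lemma multilinear_form_measurable_PiM:
  assumes "l \<le> j"
  shows "multilinear_form l e B \<in> borel_measurable (PiM {..<j} (\<lambda>_. borel))"
  using borel_measurable_multilinear_form[of l "\<lambda>i x. x i" "PiM {..<j} (\<lambda>_. borel)" e B] assms
  by simp

lemma multilinear_form_sum_measurable_PiM:
  "(\<lambda>x. \<Sum>m<l. x m * multilinear_form m e (B m) x) \<in> borel_measurable (PiM {..<l} (\<lambda>_. borel))"
proof (intro borel_measurable_sum borel_measurable_times)
  fix m
  assume "m \<in> {..<l}"
  then show "(\<lambda>x. x m) \<in> borel_measurable (PiM {..<l} (\<lambda>_. borel))"
    and "multilinear_form m e (B m) \<in> borel_measurable (PiM {..<l} (\<lambda>_. borel))"
    by (auto intro: measurable_component_singleton multilinear_form_measurable_PiM)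
qed

lemma (in prob_space) integral_prefix_mult:
  fixes X :: "nat \<Rightarrow> 'a \<Rightarrow> real" and F :: "(nat \<Rightarrow> real) \<Rightarrow> real" and G :: "real \<Rightarrow> real"
  assumes ind: "indep_vars (\<lambda>_. borel) X {..<n}" and l: "l < n"
    and F: "F \<in> borel_measurable (PiM {..<l} (\<lambda>_. borel))" and G: "G \<in> borel_measurable borel"
    and F_int: "integrable M (\<lambda>\<omega>. F (restrict (\<lambda>i. X i \<omega>) {..<l}))"
    and G_int: "integrable M (\<lambda>\<omega>. G (X l \<omega>))"
  shows "integrable M (\<lambda>\<omega>. F (restrict (\<lambda>i. X i \<omega>) {..<l}) * G (X l \<omega>))"
    and "(\<integral>\<omega>. F (restrict (\<lambda>i. X i \<omega>) {..<l}) * G (X l \<omega>) \<partial>M)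
           = (\<integral>\<omega>. F (restrict (\<lambda>i. X i \<omega>) {..<l}) \<partial>M) * (\<integral>\<omega>. G (X l \<omega>) \<partial>M)"
proof -
  have "indep_var (PiM {..<l} (\<lambda>_. borel)) (\<lambda>\<omega>. restrict (\<lambda>i. X i \<omega>) {..<l})
                  (PiM {l} (\<lambda>_. borel)) (\<lambda>\<omega>. restrict (\<lambda>i. X i \<omega>) {l})"
    using l by (intro indep_var_restrict[OF ind]) auto
  moreover have "(\<lambda>x. G (x l)) \<in> borel_measurable (PiM {l} (\<lambda>_. borel :: real measure))"
    using G by measurable
  ultimately have "indep_var borel (F \<circ> (\<lambda>\<omega>. restrict (\<lambda>i. X i \<omega>) {..<l}))
                  borel ((\<lambda>x. G (x l)) \<circ> (\<lambda>\<omega>. restrict (\<lambda>i. X i \<omega>) {l}))"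
    using F by (intro indep_var_compose) auto
  then have iv: "indep_var borel (\<lambda>\<omega>. F (restrict (\<lambda>i. X i \<omega>) {..<l})) borel (\<lambda>\<omega>. G (X l \<omega>))"
    by (simp add: comp_def)
  show "integrable M (\<lambda>\<omega>. F (restrict (\<lambda>i. X i \<omega>) {..<l}) * G (X l \<omega>))"
    using indep_var_integrable[OF iv F_int G_int] .
  show "(\<integral>\<omega>. F (restrict (\<lambda>i. X i \<omega>) {..<l}) * G (X l \<omega>) \<partial>M)
      = (\<integral>\<omega>. F (restrict (\<lambda>i. X i \<omega>) {..<l}) \<partial>M) * (\<integral>\<omega>. G (X l \<omega>) \<partial>M)"
    using indep_var_lebesgue_integral[OF iv F_int G_int] .
qed

lemma (in prob_space) integral_abs_powr_mult_multilinear_form: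
  fixes X :: "nat \<Rightarrow> 'a \<Rightarrow> real"
  assumes ind: "indep_vars (\<lambda>_. borel) X {..<n}" and l: "l < n"
    and H_int: "integrable M (\<lambda>\<omega>. \<bar>multilinear_form l e B (\<lambda>i. X i \<omega>)\<bar> powr p)"
    and X_int: "integrable M (\<lambda>\<omega>. \<bar>X l \<omega>\<bar> powr p)"
  shows "integrable M (\<lambda>\<omega>. \<bar>X l \<omega> * multilinear_form l e B (\<lambda>i. X i \<omega>)\<bar> powr p)"
    and "(\<integral>\<omega>. \<bar>X l \<omega> * multilinear_form l e B (\<lambda>i. X i \<omega>)\<bar> powr p \<partial>M)
           = (\<integral>\<omega>. \<bar>multilinear_form l e B (\<lambda>i. X i \<omega>)\<bar> powr p \<partial>M) * (\<integral>\<omega>. \<bar>X l \<omega>\<bar> powr p \<partial>M)"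
proof -
  define F where "F x = \<bar>multilinear_form l e B x\<bar> powr p" for x
  have F: "F \<in> borel_measurable (PiM {..<l} (\<lambda>_. borel))"
    unfolding F_def using multilinear_form_measurable_PiM[of l l e B] by measurable
  have F_restrict: "F (restrict (\<lambda>i. X i \<omega>) {..<l}) = \<bar>multilinear_form l e B (\<lambda>i. X i \<omega>)\<bar> powr p" for \<omega>
    by (simp add: F_def multilinear_form_restrict)
  have eq: "\<bar>X l \<omega> * multilinear_form l e B (\<lambda>i. X i \<omega>)\<bar> powr p
      = F (restrict (\<lambda>i. X i \<omega>) {..<l}) * \<bar>X l \<omega>\<bar> powr p" for \<omega>
    by (simp add: F_restrict abs_mult powr_mult mult.commute)
  note prefix = integral_prefix_mult[OF ind l F, of "\<lambda>s. \<bar>s\<bar> powr p"]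
  show "integrable M (\<lambda>\<omega>. \<bar>X l \<omega> * multilinear_form l e B (\<lambda>i. X i \<omega>)\<bar> powr p)"
    and "(\<integral>\<omega>. \<bar>X l \<omega> * multilinear_form l e B (\<lambda>i. X i \<omega>)\<bar> powr p \<partial>M)
           = (\<integral>\<omega>. \<bar>multilinear_form l e B (\<lambda>i. X i \<omega>)\<bar> powr p \<partial>M) * (\<integral>\<omega>. \<bar>X l \<omega>\<bar> powr p \<partial>M)"
    unfolding eq using prefix H_int X_int by (simp_all add: F_restrict)
qed

locale centered_indep_vars = prob_space +
  fixes n :: nat and X :: "nat \<Rightarrow> 'a \<Rightarrow> real"
  assumes X_meas: "\<And>i. i < n \<Longrightarrow> X i \<in> borel_measurable M"
    and X_indep: "indep_vars (\<lambda>_. borel) X {..<n}"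
    and X_int: "\<And>i. i < n \<Longrightarrow> integrable M (X i)"
    and X_centered: "\<And>i. i < n \<Longrightarrow> expectation (X i) = 0"
begin

lemma integral_powr_deriv_mult_increment:
  fixes B :: "nat \<Rightarrow> nat list \<Rightarrow> real" and l e :: nat
  defines "S \<equiv> \<lambda>\<omega>. \<Sum>m<l. X m \<omega> * multilinear_form m e (B m) (\<lambda>i. X i \<omega>)"
  assumes p: "2 \<le> p" and l: "l < n"
    and S_int: "integrable M (\<lambda>\<omega>. \<bar>S \<omega>\<bar> powr p)"
    and H_int: "integrable M (\<lambda>\<omega>. \<bar>multilinear_form l e (B l) (\<lambda>i. X i \<omega>)\<bar> powr p)"
  shows "(\<integral>\<omega>. powr_deriv p (S \<omega>) * (X l \<omega> * multilinear_form l e (B l) (\<lambda>i. X i \<omega>)) \<partial>M) = 0"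
proof -
  define F where "F x = powr_deriv p (\<Sum>m<l. x m * multilinear_form m e (B m) x)
                          * multilinear_form l e (B l) x" for x
  have F: "F \<in> borel_measurable (PiM {..<l} (\<lambda>_. borel))"
    unfolding F_def[abs_def] powr_deriv_def
    using multilinear_form_sum_measurable_PiM[where l = l and e = e and B = B] multilinear_form_measurable_PiM[of l l e "B l"]
    by measurable
  have F_restrict: "F (restrict (\<lambda>i. X i \<omega>) {..<l})
      = powr_deriv p (S \<omega>) * multilinear_form l e (B l) (\<lambda>i. X i \<omega>)" for \<omega>
    unfolding F_def S_def by (simp add: multilinear_form_restrict)
  have F_int: "integrable M (\<lambda>\<omega>. F (restrict (\<lambda>i. X i \<omega>) {..<l}))"
    unfolding F_restrict
  proof (rule Bochner_Integration.integrable_bound[OF Bochner_Integration.integrable_add[OF S_int H_int]])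
    have "S \<in> borel_measurable M"
      unfolding S_def using l X_meas
      by (intro borel_measurable_sum borel_measurable_times borel_measurable_multilinear_form) auto
    moreover have "(\<lambda>\<omega>. multilinear_form l e (B l) (\<lambda>i. X i \<omega>)) \<in> borel_measurable M"
      using l X_meas by (intro borel_measurable_multilinear_form) auto
    ultimately show "(\<lambda>\<omega>. powr_deriv p (S \<omega>) * multilinear_form l e (B l) (\<lambda>i. X i \<omega>))
        \<in> borel_measurable M"
      unfolding powr_deriv_def by measurable
    show "AE \<omega> in M. norm (powr_deriv p (S \<omega>) * multilinear_form l e (B l) (\<lambda>i. X i \<omega>))
        \<le> norm (\<bar>S \<omega>\<bar> powr p + \<bar>multilinear_form l e (B l) (\<lambda>i. X i \<omega>)\<bar> powr p)"
      using abs_powr_deriv_mult_le[OF p] by (auto intro!: AE_I2)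
  qed
  have "(\<integral>\<omega>. powr_deriv p (S \<omega>) * (X l \<omega> * multilinear_form l e (B l) (\<lambda>i. X i \<omega>)) \<partial>M)
      = (\<integral>\<omega>. F (restrict (\<lambda>i. X i \<omega>) {..<l}) * X l \<omega> \<partial>M)"
    by (simp add: F_restrict mult_ac)
  also have "\<dots> = (\<integral>\<omega>. F (restrict (\<lambda>i. X i \<omega>) {..<l}) \<partial>M) * expectation (X l)"
    by (rule integral_prefix_mult(2)[OF X_indep l F, of "\<lambda>s. s"]) (use F_int X_int[OF l] in auto)
  finally show ?thesis
    using X_centered[OF l] by simp
qed

end

section \<open>Moments of the chaos\<close>

lemma sum_powr_powr_le:
  fixes \<beta> h :: "nat \<Rightarrow> real"
  assumes p: "0 < p" and C: "0 \<le> C" and c: "0 \<le> c" and H: "0 \<le> H"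
    and \<beta>: "\<And>l. l < k \<Longrightarrow> 0 \<le> \<beta> l \<and> \<beta> l \<le> C * h l powr p" and h: "\<And>l. 0 \<le> h l"
    and sum_h: "(\<Sum>l<k. (h l)\<^sup>2) \<le> c * H\<^sup>2"
  shows "(\<Sum>l<k. \<beta> l powr (2/p)) powr (p/2) \<le> C * c powr (p/2) * H powr p"
proof -
  have "\<beta> l powr (2/p) \<le> C powr (2/p) * (h l)\<^sup>2" if "l < k" for l
  proof -
    have "\<beta> l powr (2/p) \<le> (C * h l powr p) powr (2/p)"
      using \<beta>[OF that] p by (intro powr_mono2) auto
    also have "\<dots> = C powr (2/p) * (h l)\<^sup>2"
      using C h[of l] p by (simp add: powr_mult powr_powr powr_numeral)
    finally show ?thesis .
  qed
  then have "(\<Sum>l<k. \<beta> l powr (2/p)) \<le> C powr (2/p) * (\<Sum>l<k. (h l)\<^sup>2)"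
    by (auto simp: sum_distrib_left intro!: sum_mono)
  also have "\<dots> \<le> C powr (2/p) * (c * H\<^sup>2)"
    using sum_h by (intro mult_left_mono) auto
  finally have "(\<Sum>l<k. \<beta> l powr (2/p)) powr (p/2) \<le> (C powr (2/p) * (c * H\<^sup>2)) powr (p/2)"
    using p by (intro powr_mono2) (auto intro!: sum_nonneg)
  also have "\<dots> = (C powr (2/p)) powr (p/2) * c powr (p/2) * (H powr 2) powr (p/2)"
    using C c H by (simp add: powr_mult)
  also have "\<dots> = C * c powr (p/2) * H powr p"
    using C p by (simp add: powr_powr)
  finally show ?thesis .
qed

definition chaos_moment_const :: "real \<Rightarrow> real \<Rightarrow> nat \<Rightarrow> real" where
  "chaos_moment_const a p d = martingale_const a ^ d * fact d powr (p/2)"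

lemma chaos_moment_const_nonneg: "2 \<le> p \<Longrightarrow> p \<le> a \<Longrightarrow> 0 \<le> chaos_moment_const a p d"
  using martingale_const_ge(3)[of p a] by (simp add: chaos_moment_const_def)

lemma chaos_moment_const_Suc:
  "chaos_moment_const a p (Suc e) = martingale_const a * real (Suc e) powr (p/2) * chaos_moment_const a p e"
proof -
  have "fact (Suc e) powr (p/2) = real (Suc e) powr (p/2) * (fact e :: real) powr (p/2)"
    by (simp add: powr_mult)
  then show ?thesis
    by (simp add: chaos_moment_const_def)
qed

context centered_indep_vars
begin

text \<open>Ordering the multi-indices by their largest entry \<open>l\<close> writes the chaos of degree \<open>e + 1\<close> as
  the martingale \<open>\<Sum>\<^sub>l X\<^sub>l H\<^sub>l\<close>, whose coefficients \<open>H\<^sub>l\<close> are chaoses of degree \<open>e\<close> in \<open>X\<^sub>0, \<dots>, X\<^sub>l\<^sub>-\<^sub>1\<close>.\<close>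
lemma chaos_moment_Suc:
  assumes p: "2 \<le> p" "p \<le> a" and k: "k \<le> n" and A: "gen_diag_zero k (Suc e) A"
    and X_powr_int: "\<And>i. i < n \<Longrightarrow> integrable M (\<lambda>\<omega>. \<bar>X i \<omega>\<bar> powr p)"
    and X_moment: "\<And>i. i < n \<Longrightarrow> (\<integral>\<omega>. \<bar>X i \<omega>\<bar> powr p \<partial>M) \<le> \<mu>"
    and \<mu>: "0 \<le> \<mu>" and C: "0 \<le> C"
    and H_int: "\<And>l. l < k \<Longrightarrow> integrable M (\<lambda>\<omega>. \<bar>multilinear_form l e (top_slice A l) (\<lambda>i. X i \<omega>)\<bar> powr p)"
    and H_moment: "\<And>l. l < k \<Longrightarrow> (\<integral>\<omega>. \<bar>multilinear_form l e (top_slice A l) (\<lambda>i. X i \<omega>)\<bar> powr p \<partial>M)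
                                \<le> C * hs_norm l e (top_slice A l) powr p"
  shows "integrable M (\<lambda>\<omega>. \<bar>multilinear_form k (Suc e) A (\<lambda>i. X i \<omega>)\<bar> powr p)"
    and "(\<integral>\<omega>. \<bar>multilinear_form k (Suc e) A (\<lambda>i. X i \<omega>)\<bar> powr p \<partial>M)
           \<le> martingale_const a * (C * \<mu>) * real (Suc e) powr (p/2) * hs_norm k (Suc e) A powr p"
proof -
  define H where "H l \<omega> = multilinear_form l e (top_slice A l) (\<lambda>i. X i \<omega>)" for l \<omega>
  define D where "D l \<omega> = X l \<omega> * H l \<omega>" for l \<omega>
  define S where "S j \<omega> = (\<Sum>l<j. D l \<omega>)" for j \<omega>
  have D_meas: "D l \<in> borel_measurable M" if "l < k" for l
    unfolding D_def[abs_def] H_def using that k X_meas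
    by (intro borel_measurable_times borel_measurable_multilinear_form) auto
  have D_moment: "integrable M (\<lambda>\<omega>. \<bar>D l \<omega>\<bar> powr p) \<and>
      (\<integral>\<omega>. \<bar>D l \<omega>\<bar> powr p \<partial>M) = (\<integral>\<omega>. \<bar>H l \<omega>\<bar> powr p \<partial>M) * (\<integral>\<omega>. \<bar>X l \<omega>\<bar> powr p \<partial>M)"
    if "l < k" for l
    using integral_abs_powr_mult_multilinear_form[OF X_indep _ H_int[OF that] X_powr_int] that k
    by (simp add: D_def H_def)
  have D_bound: "0 \<le> (\<integral>\<omega>. \<bar>D l \<omega>\<bar> powr p \<partial>M) \<and>
      (\<integral>\<omega>. \<bar>D l \<omega>\<bar> powr p \<partial>M) \<le> (C * \<mu>) * hs_norm l e (top_slice A l) powr p" if l: "l < k" for l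
  proof -
    have "(\<integral>\<omega>. \<bar>D l \<omega>\<bar> powr p \<partial>M) \<le> C * hs_norm l e (top_slice A l) powr p * \<mu>"
      unfolding D_moment[OF l, THEN conjunct2] H_def using l k C
      by (intro mult_mono H_moment X_moment) (auto intro!: integral_nonneg_AE)
    then show ?thesis
      by (auto simp: mult_ac intro!: integral_nonneg_AE)
  qed
  have orth: "(\<integral>\<omega>. powr_deriv p (S l \<omega>) * D l \<omega> \<partial>M) = 0"
    if l: "l < k" and S_int: "integrable M (\<lambda>\<omega>. \<bar>S l \<omega>\<bar> powr p)" for l
    unfolding S_def D_def H_def using l k S_int H_int[OF l]
    by (intro integral_powr_deriv_mult_increment[OF p(1)]) (simp_all add: S_def D_def H_def)
  have "S 0 \<omega> = 0" "S (Suc l) \<omega> = S l \<omega> + D l \<omega>" for l \<omega>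
    by (simp_all add: S_def)
  note mart = martingale_moment_bound[where S = S and D = D and n = k and M = M,
      OF p this D_meas conjunct1[OF D_moment] orth]
  have "(\<integral>\<omega>. \<bar>S k \<omega>\<bar> powr p \<partial>M)
      \<le> martingale_const a * (\<Sum>l<k. (\<integral>\<omega>. \<bar>D l \<omega>\<bar> powr p \<partial>M) powr (2/p)) powr (p/2)"
    by (rule mart(2))
  also have "\<dots> \<le> martingale_const a * (C * \<mu> * real (Suc e) powr (p/2) * hs_norm k (Suc e) A powr p)"
    using p \<mu> C D_bound sum_hs_norm_top_slice_le[OF A] martingale_const_ge(3)[OF p]
    by (intro mult_left_mono sum_powr_powr_le) (auto simp: hs_norm_nonneg)
  moreover have "multilinear_form k (Suc e) A (\<lambda>i. X i \<omega>) = S k \<omega>" for \<omega>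
    unfolding multilinear_form_Suc[OF A] S_def D_def H_def by simp
  ultimately show "integrable M (\<lambda>\<omega>. \<bar>multilinear_form k (Suc e) A (\<lambda>i. X i \<omega>)\<bar> powr p)"
    and "(\<integral>\<omega>. \<bar>multilinear_form k (Suc e) A (\<lambda>i. X i \<omega>)\<bar> powr p \<partial>M)
           \<le> martingale_const a * (C * \<mu>) * real (Suc e) powr (p/2) * hs_norm k (Suc e) A powr p"
    using mart(1) by (simp_all add: mult_ac)
qed

lemma chaos_moment_bound:
  assumes p: "2 \<le> p" "p \<le> a" and \<mu>: "0 \<le> \<mu>"
    and X_powr_int: "\<And>i. i < n \<Longrightarrow> integrable M (\<lambda>\<omega>. \<bar>X i \<omega>\<bar> powr p)"
    and X_moment: "\<And>i. i < n \<Longrightarrow> (\<integral>\<omega>. \<bar>X i \<omega>\<bar> powr p \<partial>M) \<le> \<mu>"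
  shows "k \<le> n \<Longrightarrow> gen_diag_zero k d A \<Longrightarrow>
     integrable M (\<lambda>\<omega>. \<bar>multilinear_form k d A (\<lambda>i. X i \<omega>)\<bar> powr p) \<and>
     (\<integral>\<omega>. \<bar>multilinear_form k d A (\<lambda>i. X i \<omega>)\<bar> powr p \<partial>M)
       \<le> chaos_moment_const a p d * \<mu> ^ d * hs_norm k d A powr p"
proof (induction d arbitrary: k A)
  case 0
  have form: "multilinear_form k 0 A x = A []" for x
    by (simp add: multilinear_form_def tensor_indices_0)
  have norm: "hs_norm k 0 A = \<bar>A []\<bar>"
    by (simp add: hs_norm_def tensor_indices_0)
  show ?case
    by (simp add: form norm chaos_moment_const_def prob_space)
next
  case (Suc e)
  then have k: "k \<le> n" and A: "gen_diag_zero k (Suc e) A"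
    by auto
  have C: "0 \<le> chaos_moment_const a p e * \<mu> ^ e"
    using p \<mu> by (simp add: chaos_moment_const_nonneg)
  have IH: "integrable M (\<lambda>\<omega>. \<bar>multilinear_form l e (top_slice A l) (\<lambda>i. X i \<omega>)\<bar> powr p) \<and>
      (\<integral>\<omega>. \<bar>multilinear_form l e (top_slice A l) (\<lambda>i. X i \<omega>)\<bar> powr p \<partial>M)
        \<le> chaos_moment_const a p e * \<mu> ^ e * hs_norm l e (top_slice A l) powr p" if "l < k" for l
    using Suc.IH[of l "top_slice A l"] gen_diag_zero_top_slice[OF A that] that k by simp
  note step = chaos_moment_Suc[OF p k A X_powr_int X_moment \<mu> C conjunct1[OF IH] conjunct2[OF IH]]
  show ?case
    using step by (simp add: chaos_moment_const_Suc mult_ac)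
qed

end

section \<open>Moment and tail bounds for the chaos\<close>

definition chaos_Lp_const :: "real \<Rightarrow> nat \<Rightarrow> real" where
  "chaos_Lp_const a d = martingale_const a ^ d * sqrt (fact d) * tail_moment_const a ^ d"

lemma chaos_Lp_const_ge_1:
  assumes "2 < a"
  shows "1 \<le> chaos_Lp_const a d"
proof -
  have "1 \<le> martingale_const a ^ d"
    using martingale_const_ge(3)[of 2 a] assms by simp
  moreover have "1 \<le> tail_moment_const a ^ d"
    by (simp add: tail_moment_const_def)
  moreover have "1 \<le> sqrt (fact d)"
    by simp
  ultimately show ?thesis
    unfolding chaos_Lp_const_def by (metis mult_mono' mult_1 zero_le_one order_trans)
qed

lemma chaos_moment_const_root_le:
  assumes p: "2 \<le> p" "p \<le> a"
  shows "chaos_moment_const a p d powr (1/p) \<le> martingale_const a ^ d * sqrt (fact d)"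
proof -
  have K: "1 \<le> martingale_const a ^ d"
    using martingale_const_ge(3)[OF p] by simp
  have "chaos_moment_const a p d powr (1/p)
      = (martingale_const a ^ d) powr (1/p) * (fact d powr (p/2)) powr (1/p)"
    by (simp add: chaos_moment_const_def powr_mult)
  also have "(fact d powr (p/2)) powr (1/p) = sqrt (fact d)"
    using p by (simp add: powr_powr powr_half_sqrt[symmetric])
  also have "(martingale_const a ^ d) powr (1/p) \<le> (martingale_const a ^ d) powr 1"
    using K p by (intro powr_mono) auto
  finally show ?thesis
    using K by (simp add: mult_right_mono)
qed

lemma tail_moment_root_le:
  assumes p: "2 \<le> p" "p < a" and b: "b > 0"
  shows "((b powr p * tail_moment_const a * (a / (a - p))) ^ d) powr (1/p)
           \<le> b ^ d * tail_moment_const a ^ d * (a / (a - p)) powr (real d / p)"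
proof -
  have G: "1 \<le> tail_moment_const a"
    by (simp add: tail_moment_const_def)
  have "((b powr p * tail_moment_const a * (a / (a - p))) ^ d) powr (1/p)
      = (b powr p * tail_moment_const a * (a / (a - p))) powr (real d / p)"
    using b G p by (simp add: powr_realpow[symmetric] powr_powr)
  also have "\<dots> = (b powr p) powr (real d / p) * tail_moment_const a powr (real d / p)
      * (a / (a - p)) powr (real d / p)"
    by (simp only: powr_mult)
  also have "(b powr p) powr (real d / p) = b ^ d"
    using b p by (simp add: powr_powr powr_realpow)
  also have "tail_moment_const a powr (real d / p) \<le> tail_moment_const a ^ d"
  proof -
    have "real d \<le> p * real d"
      using p by (intro mult_le_cancel_right1[THEN iffD2]) auto
    then have "real d / p \<le> real d"
      using p by (simp add: field_simps)
    then show ?thesis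
      using G by (simp add: powr_realpow[symmetric] powr_mono)
  qed
  finally show ?thesis
    using b by (simp add: mult_left_mono mult_right_mono)
qed

lemma measure_abs_ge_le_Lp_norm:
  fixes Z :: "'a \<Rightarrow> real"
  assumes int: "integrable M (\<lambda>\<omega>. \<bar>Z \<omega>\<bar> powr p)" and p: "0 < p" and t: "0 < t"
  shows "measure M {\<omega>\<in>space M. \<bar>Z \<omega>\<bar> \<ge> t} \<le> (Lp_norm M p Z / t) powr p"
proof -
  define E where "E = (\<integral>\<omega>. \<bar>Z \<omega>\<bar> powr p \<partial>M)"
  have E: "0 \<le> E"
    unfolding E_def by (intro integral_nonneg_AE) auto
  have "t \<le> y \<longleftrightarrow> t powr p \<le> y powr p" if "0 \<le> y" for y :: real
    using p t that powr_less_mono2[of p y t] by (cases "y < t") (auto intro: powr_mono2)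
  then have "{\<omega>\<in>space M. \<bar>Z \<omega>\<bar> \<ge> t} = {\<omega>\<in>space M. \<bar>Z \<omega>\<bar> powr p \<ge> t powr p}"
    by auto
  also have "measure M \<dots> \<le> E / t powr p"
    unfolding E_def using int t by (intro integral_Markov_inequality_measure[where A = "space M"]) auto
  also have "E / t powr p = (Lp_norm M p Z / t) powr p"
    using E p t by (simp add: Lp_norm_def E_def[symmetric] powr_divide powr_powr)
  finally show ?thesis .
qed

definition chaos_const :: "real \<Rightarrow> nat \<Rightarrow> real" where
  "chaos_const a d = exp (1 + 1 / (a - 2)) * a ^ d * chaos_Lp_const a d powr a"

lemma chaos_const_ge:
  assumes a: "2 < a"
  shows "chaos_Lp_const a d \<le> chaos_const a d"
    and "exp (1 + 1 / (a - 2)) \<le> chaos_const a d"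
    and "exp 1 * a ^ d * chaos_Lp_const a d powr a \<le> chaos_const a d"
    and "0 < chaos_const a d"
proof -
  have C1: "1 \<le> chaos_Lp_const a d"
    using chaos_Lp_const_ge_1[OF a] .
  have E: "1 \<le> exp (1 + 1 / (a - 2))" "exp 1 \<le> exp (1 + 1 / (a - 2))"
    using a by auto
  have ad: "1 \<le> a ^ d"
    using a by simp
  have "chaos_Lp_const a d = chaos_Lp_const a d powr 1"
    using C1 by simp
  also have "\<dots> \<le> chaos_Lp_const a d powr a"
    using C1 a by (intro powr_mono) auto
  finally have P: "chaos_Lp_const a d \<le> chaos_Lp_const a d powr a" .
  then have P1: "1 \<le> chaos_Lp_const a d powr a"
    using C1 by linarith
  have "1 \<le> exp (1 + 1 / (a - 2)) * a ^ d"
    using E ad mult_mono[OF E(1) ad] by simp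
  then have "1 * chaos_Lp_const a d powr a \<le> exp (1 + 1 / (a - 2)) * a ^ d * chaos_Lp_const a d powr a"
    using P1 by (intro mult_right_mono) auto
  then show "chaos_Lp_const a d \<le> chaos_const a d"
    unfolding chaos_const_def using P by linarith
  show "exp (1 + 1 / (a - 2)) \<le> chaos_const a d"
    unfolding chaos_const_def using E ad P1 mult_mono[OF ad P1] mult_left_mono[of 1 "a ^ d * chaos_Lp_const a d powr a"]
    by (simp add: mult.assoc)
  show "exp 1 * a ^ d * chaos_Lp_const a d powr a \<le> chaos_const a d"
    unfolding chaos_const_def using E ad P1 by (intro mult_right_mono) auto
  then show "0 < chaos_const a d"
    using ad P1 by (smt (verit) exp_gt_zero mult_pos_pos)
qed

text \<open>The exponent used in Markov's inequality for a deviation \<open>u\<close> (in units of \<open>\<parallel>A\<parallel>\<^sub>H\<^sub>S b\<^sup>d\<close>):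
  with \<open>p = a - 1 / ln u\<close> the factor \<open>a / (a - p)\<close> is \<open>a ln u\<close> while \<open>u\<^sup>-\<^sup>p\<close> loses only a factor \<open>e\<close>
  against \<open>u\<^sup>-\<^sup>a\<close>.\<close>
lemma tail_exponent:
  fixes a u :: real
  assumes a: "2 < a" and u: "exp (1 + 1 / (a - 2)) \<le> u"
  defines "p \<equiv> a - 1 / ln u"
  shows "2 \<le> p" and "p < a" and "1 \<le> ln u" and "a / (a - p) = a * ln u"
    and "(1 / u) powr p = exp 1 * (1 / u) powr a"
proof -
  have u_pos: "0 < u"
    using less_le_trans[OF exp_gt_zero u] .
  then have L: "1 + 1 / (a - 2) \<le> ln u"
    using u by (simp add: ln_ge_iff)
  moreover have "0 < 1 / (a - 2)"
    using a by simp
  ultimately show L1: "1 \<le> ln u"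
    by linarith
  have "1 / ln u \<le> a - 2"
    using L L1 a by (simp add: field_simps)
  then show "2 \<le> p" and "p < a"
    using L1 by (auto simp: p_def)
  show "a / (a - p) = a * ln u"
    using L1 by (simp add: p_def)
  have "(1 / u) powr p = (1 / u) powr a * u powr (1 / ln u)"
    using u_pos by (simp add: p_def powr_diff powr_divide)
  also have "u powr (1 / ln u) = exp 1"
    using u_pos L1 by (auto simp: powr_def)
  finally show "(1 / u) powr p = exp 1 * (1 / u) powr a"
    by simp
qed

lemma chaos_eq_0_if_hs_norm_eq_0:
  assumes "hs_norm n d A = 0"
  shows "chaos n d A X \<omega> = 0"
proof -
  have "A ks = 0" if "ks \<in> tensor_indices n d" for ks
    using that assms hs_norm_sq[of n d A] by (simp add: sum_nonneg_eq_0_iff)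
  then show ?thesis
    by (simp add: chaos_def)
qed

locale heavy_tailed_chaos = centered_indep_vars +
  fixes a b :: real and d :: nat and A :: "nat list \<Rightarrow> real"
  assumes exponent: "2 < a" and scale: "0 < b"
    and X_tail: "\<And>i t. i < n \<Longrightarrow> t \<ge> b \<Longrightarrow> measure M {\<omega>\<in>space M. \<bar>X i \<omega>\<bar> \<ge> t} \<le> (b / t) powr a"
    and A_diag: "gen_diag_zero n d A"
begin

lemma chaos_Lp_bound:
  assumes p: "2 \<le> p" "p < a"
  shows "integrable M (\<lambda>\<omega>. \<bar>chaos n d A X \<omega>\<bar> powr p)"
    and "Lp_norm M p (chaos n d A X) \<le> chaos_Lp_const a d * hs_norm n d A * b ^ d * (a / (a - p)) powr (real d / p)"
proof -
  define \<mu> where "\<mu> = b powr p * tail_moment_const a * (a / (a - p))"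
  have \<mu>: "0 \<le> \<mu>"
    using p by (simp add: \<mu>_def tail_moment_const_def)
  note X_moment = moment_le_of_tail[OF X_meas scale _ p(2) _ X_tail]
  have "integrable M (\<lambda>\<omega>. \<bar>multilinear_form n d A (\<lambda>i. X i \<omega>)\<bar> powr p) \<and>
     (\<integral>\<omega>. \<bar>multilinear_form n d A (\<lambda>i. X i \<omega>)\<bar> powr p \<partial>M)
       \<le> chaos_moment_const a p d * \<mu> ^ d * hs_norm n d A powr p"
    using p X_moment exponent by (intro chaos_moment_bound \<mu> A_diag) (auto simp: \<mu>_def)
  then have int: "integrable M (\<lambda>\<omega>. \<bar>chaos n d A X \<omega>\<bar> powr p)"
    and moment: "(\<integral>\<omega>. \<bar>chaos n d A X \<omega>\<bar> powr p \<partial>M) \<le> chaos_moment_const a p d * \<mu> ^ d * hs_norm n d A powr p"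
    by (simp_all add: chaos_eq_multilinear_form)
  show "integrable M (\<lambda>\<omega>. \<bar>chaos n d A X \<omega>\<bar> powr p)"
    by (fact int)
  have "Lp_norm M p (chaos n d A X) \<le> (chaos_moment_const a p d * \<mu> ^ d * hs_norm n d A powr p) powr (1/p)"
    unfolding Lp_norm_def using moment p by (intro powr_mono2) (auto intro!: integral_nonneg_AE)
  also have "\<dots> = chaos_moment_const a p d powr (1/p) * (\<mu> ^ d) powr (1/p) * hs_norm n d A"
    using p \<mu> chaos_moment_const_nonneg[of p a d] hs_norm_nonneg[of n d A]
    by (simp add: powr_mult powr_powr)
  also have "\<dots> \<le> (martingale_const a ^ d * sqrt (fact d))
      * (b ^ d * tail_moment_const a ^ d * (a / (a - p)) powr (real d / p)) * hs_norm n d A"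
    using chaos_moment_const_root_le[of p a d] tail_moment_root_le[OF p scale, of d] p scale
      martingale_const_ge(3)[of p a] hs_norm_nonneg[of n d A]
    by (intro mult_mono mult_right_mono) (auto simp: \<mu>_def tail_moment_const_def)
  finally show "Lp_norm M p (chaos n d A X)
      \<le> chaos_Lp_const a d * hs_norm n d A * b ^ d * (a / (a - p)) powr (real d / p)"
    by (simp add: chaos_Lp_const_def mult_ac)
qed

lemma chaos_tail_bound:
  assumes t: "t > 0" "t \<ge> chaos_const a d * hs_norm n d A * b ^ d"
  shows "measure M {\<omega>\<in>space M. \<bar>chaos n d A X \<omega>\<bar> \<ge> t}
          \<le> chaos_const a d * (ln (t / (hs_norm n d A * b ^ d))) ^ d * ((hs_norm n d A * b ^ d) / t) powr a"
proof (cases "hs_norm n d A = 0")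
  case True
  then have "{\<omega>\<in>space M. \<bar>chaos n d A X \<omega>\<bar> \<ge> t} = {}"
    using t by (simp add: chaos_eq_0_if_hs_norm_eq_0)
  then show ?thesis
    using True by (simp only: measure_empty) simp
next
  case False
  define H where "H = hs_norm n d A * b ^ d"
  define C1 where "C1 = chaos_Lp_const a d"
  define L where "L = ln (t / H)"
  define p where "p = a - 1 / L"
  have H: "H > 0"
    using False hs_norm_nonneg[of n d A] scale by (simp add: H_def)
  have "exp (1 + 1 / (a - 2)) * H \<le> chaos_const a d * H"
    using chaos_const_ge(2)[OF exponent, of d] H by (intro mult_right_mono) auto
  also have "\<dots> \<le> t"
    using t(2) by (simp add: H_def mult.assoc)
  finally have "exp (1 + 1 / (a - 2)) \<le> t / H"
    using H by (simp add: le_divide_eq)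
  note exponent_choice = tail_exponent[OF exponent this, folded L_def p_def]
  have C1: "1 \<le> C1"
    unfolding C1_def using exponent by (rule chaos_Lp_const_ge_1)
  have "measure M {\<omega>\<in>space M. \<bar>chaos n d A X \<omega>\<bar> \<ge> t} \<le> (Lp_norm M p (chaos n d A X) / t) powr p"
    using chaos_Lp_bound(1)[OF exponent_choice(1,2)] exponent_choice t
    by (intro measure_abs_ge_le_Lp_norm) auto
  also have "\<dots> \<le> (C1 * H * (a * L) powr (real d / p) / t) powr p"
    using chaos_Lp_bound(2)[OF exponent_choice(1,2)] exponent_choice t
    by (intro powr_mono2 divide_right_mono) (auto simp: Lp_norm_def C1_def H_def mult_ac)
  also have "\<dots> = C1 powr p * (a * L) powr real d * (H / t) powr p"
    using exponent_choice(1-3) t H C1 exponent by (simp add: powr_mult powr_divide powr_powr)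
  also have "(H / t) powr p = exp 1 * (H / t) powr a"
    using exponent_choice(5) by (simp only: div_by_1 divide_divide_eq_right mult_1)
  also have "(a * L) powr real d = a ^ d * L ^ d"
    using exponent_choice exponent by (simp add: powr_realpow power_mult_distrib)
  also have "C1 powr p * (a ^ d * L ^ d) * (exp 1 * (H / t) powr a)
      = (exp 1 * a ^ d * C1 powr p) * L ^ d * (H / t) powr a"
    by (simp only: mult_ac)
  also have "\<dots> \<le> chaos_const a d * L ^ d * (H / t) powr a"
  proof -
    have "exp 1 * a ^ d * C1 powr p \<le> exp 1 * a ^ d * C1 powr a"
      using C1 exponent exponent_choice by (intro mult_left_mono powr_mono) auto
    also have "\<dots> \<le> chaos_const a d"
      using chaos_const_ge(3)[OF exponent, of d] by (simp add: C1_def)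
    finally show ?thesis
      using exponent_choice by (intro mult_right_mono) auto
  qed
  finally show ?thesis
    by (simp add: H_def L_def)
qed

lemma chaos_bounds:
  "(\<forall>p. 2 \<le> p \<and> p < a \<longrightarrow>
      integrable M (\<lambda>\<omega>. \<bar>chaos n d A X \<omega>\<bar> powr p) \<and>
      Lp_norm M p (chaos n d A X) \<le> chaos_const a d * hs_norm n d A * b ^ d * (a / (a - p)) powr (real d / p)) \<and>
   (\<forall>t. t > 0 \<and> t \<ge> chaos_const a d * hs_norm n d A * b ^ d \<longrightarrow>
      measure M {\<omega>\<in>space M. \<bar>chaos n d A X \<omega>\<bar> \<ge> t}
        \<le> chaos_const a d * (ln (t / (hs_norm n d A * b ^ d))) ^ d * ((hs_norm n d A * b ^ d) / t) powr a)"
proof (intro conjI allI impI)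
  fix p
  assume "2 \<le> p \<and> p < a"
  then have p: "2 \<le> p" "p < a"
    by auto
  show "integrable M (\<lambda>\<omega>. \<bar>chaos n d A X \<omega>\<bar> powr p)"
    using chaos_Lp_bound(1)[OF p] .
  have "chaos_Lp_const a d * (hs_norm n d A * b ^ d * (a / (a - p)) powr (real d / p))
      \<le> chaos_const a d * (hs_norm n d A * b ^ d * (a / (a - p)) powr (real d / p))"
    using chaos_const_ge(1)[OF exponent] scale hs_norm_nonneg[of n d A] by (intro mult_right_mono) auto
  then show "Lp_norm M p (chaos n d A X)
      \<le> chaos_const a d * hs_norm n d A * b ^ d * (a / (a - p)) powr (real d / p)"
    using chaos_Lp_bound(2)[OF p] by (simp add: mult.assoc)
qed (use chaos_tail_bound in auto)

end

theorem proposition3p1: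
  fixes d :: nat and \<alpha> :: real
  assumes "d \<ge> 1" and "\<alpha> > 2"
  shows "\<exists>C>0. \<forall>(M :: 'a measure) n (X :: nat \<Rightarrow> 'a \<Rightarrow> real) b (A :: nat list \<Rightarrow> real).
    prob_space M \<longrightarrow> n \<ge> 1 \<longrightarrow> b > 0 \<longrightarrow>
    (\<forall>i<n. X i \<in> borel_measurable M) \<longrightarrow>
    prob_space.indep_vars M (\<lambda>_. borel) X {..<n} \<longrightarrow>
    (\<forall>i<n. integrable M (X i) \<and> prob_space.expectation M (X i) = 0) \<longrightarrow>
    (\<forall>i<n. \<forall>t\<ge>b. measure M {\<omega>\<in>space M. \<bar>X i \<omega>\<bar> \<ge> t} \<le> (b / t) powr \<alpha>) \<longrightarrow>
    gen_diag_zero n d A \<longrightarrow>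
    (\<forall>p. 2 \<le> p \<and> p < \<alpha> \<longrightarrow>
        integrable M (\<lambda>\<omega>. \<bar>chaos n d A X \<omega>\<bar> powr p) \<and>
        Lp_norm M p (chaos n d A X)
          \<le> C * hs_norm n d A * b ^ d * (\<alpha> / (\<alpha> - p)) powr (real d / p)) \<and>
    (\<forall>t. t > 0 \<and> t \<ge> C * hs_norm n d A * b ^ d \<longrightarrow>
        measure M {\<omega>\<in>space M. \<bar>chaos n d A X \<omega>\<bar> \<ge> t}
          \<le> C * (ln (t / (hs_norm n d A * b ^ d))) ^ d
               * ((hs_norm n d A * b ^ d) / t) powr \<alpha>)"
  by (intro exI[of _ "chaos_const \<alpha> d"] conjI[OF chaos_const_ge(4)[OF assms(2)]] allI impI
      heavy_tailed_chaos.chaos_bounds heavy_tailed_chaos.intro centered_indep_vars.intro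
      centered_indep_vars_axioms.intro heavy_tailed_chaos_axioms.intro) (auto simp: assms(2))

end
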